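(* Let $f_1,\dots,f_h$ ($h\ge 2$) be germs of biholomorphisms of $\mathbb{C}^n$ fixing the origin, each formally linearizable, with simultaneously diagonalizable linear parts. Then $f_1,\dots,f_h$ are simultaneously formally linearizable if and only if $f_p\circ f_q=f_q\circ f_p$ for all $p,q\in\{1,\dots,h\}$.
   Context: A germ $f$ fixing $0$ is formally linearizable if there is an invertible formal power series map $\varphi$ with $\varphi(0)=0$ such that $\varphi^{-1}\circ f\circ\varphi$ is linear; $f_1,\dots,f_h$ are simultaneously formally linearizable if a single such $\varphi$ makes all $\varphi^{-1}\circ f_k\circ\varphi$ linear. Commutation of germs is understood as equality of germs (equivalently of formal power series) at the origin. *)

theory Defs
  imports "HOL-Analysis.Analysis"
begin

text \<open>Formal power series in the variables z_i (i :: 'n, 'n a finite type, so n = CARD('n))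
  with complex coefficients, represented by their coefficient functions on multi-indices.
  A formal map C^n -> C^n is an 'n-tuple of such series.\<close>

type_synonym 'n mindex = "'n \<Rightarrow> nat"
type_synonym 'n fpser = "'n mindex \<Rightarrow> complex"
type_synonym 'n fmap = "'n \<Rightarrow> 'n fpser"

definition mdeg :: "('n::finite) mindex \<Rightarrow> nat" where
  "mdeg \<alpha> = (\<Sum>i\<in>UNIV. \<alpha> i)"

definition unit_mindex :: "'n \<Rightarrow> 'n mindex" where
  "unit_mindex j = (\<lambda>i. if i = j then 1 else 0)"

text \<open>Coefficient of z^\<beta> in the product over j of G_j^(\<alpha> j)
  (multinomial expansion over the finite index set of factors).\<close>
definition fm_monpow_coeff :: "('n::finite) fmap \<Rightarrow> 'n mindex \<Rightarrow> 'n mindex \<Rightarrow> complex" where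
  "fm_monpow_coeff G \<alpha> \<beta> =
     (let I = {(j, k). k < \<alpha> j} in
      \<Sum>\<gamma> \<in> {\<gamma> \<in> PiE I (\<lambda>_. {m. \<forall>i. m i \<le> \<beta> i}). (\<lambda>i. \<Sum>p\<in>I. \<gamma> p i) = \<beta>}.
         \<Prod>p\<in>I. G (fst p) (\<gamma> p))"

text \<open>Formal composition F \<circ> G, for G without constant term.\<close>
definition fm_comp :: "('n::finite) fmap \<Rightarrow> 'n fmap \<Rightarrow> 'n fmap" where
  "fm_comp F G = (\<lambda>i \<beta>. \<Sum>\<alpha> \<in> {\<alpha>. mdeg \<alpha> \<le> mdeg \<beta>}. F i \<alpha> * fm_monpow_coeff G \<alpha> \<beta>)"

definition fm_id :: "('n::finite) fmap" where
  "fm_id = (\<lambda>i \<beta>. if \<beta> = unit_mindex i then 1 else 0)"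

definition fixes_origin :: "('n::finite) fmap \<Rightarrow> bool" where
  "fixes_origin F \<longleftrightarrow> (\<forall>i. F i (\<lambda>_. 0) = 0)"

text \<open>Convergent (= germ of a holomorphic map): Cauchy-type coefficient bound.\<close>
definition fm_convergent :: "('n::finite) fmap \<Rightarrow> bool" where
  "fm_convergent F \<longleftrightarrow> (\<exists>C r. r > 0 \<and> (\<forall>i \<alpha>. norm (F i \<alpha>) \<le> C * r ^ mdeg \<alpha>))"

definition biholo_germ0 :: "('n::finite) fmap \<Rightarrow> bool" where
  "biholo_germ0 F \<longleftrightarrow> fixes_origin F \<and> fm_convergent F \<and>
     (\<exists>G. fixes_origin G \<and> fm_convergent G \<and> fm_comp F G = fm_id \<and> fm_comp G F = fm_id)"

definition fm_linear :: "('n::finite) fmap \<Rightarrow> bool" where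
  "fm_linear F \<longleftrightarrow> (\<forall>i \<beta>. mdeg \<beta> \<noteq> 1 \<longrightarrow> F i \<beta> = 0)"

definition simul_formally_linearizable :: "(nat \<Rightarrow> ('n::finite) fmap) \<Rightarrow> nat set \<Rightarrow> bool" where
  "simul_formally_linearizable F S \<longleftrightarrow>
     (\<exists>\<phi> \<psi>. fixes_origin \<phi> \<and> fixes_origin \<psi> \<and> fm_comp \<phi> \<psi> = fm_id \<and> fm_comp \<psi> \<phi> = fm_id \<and>
        (\<forall>k\<in>S. fm_linear (fm_comp \<psi> (fm_comp (F k) \<phi>))))"

definition formally_linearizable :: "('n::finite) fmap \<Rightarrow> bool" where
  "formally_linearizable f \<longleftrightarrow> simul_formally_linearizable (\<lambda>_. f) {0}"

definition lin_part :: "('n::finite) fmap \<Rightarrow> complex^'n^'n" where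
  "lin_part F = (\<chi> i j. F i (unit_mindex j))"

definition simul_diagonalizable :: "(nat \<Rightarrow> complex^('n::finite)^'n) \<Rightarrow> nat set \<Rightarrow> bool" where
  "simul_diagonalizable A S \<longleftrightarrow>
     (\<exists>(P::complex^'n^'n) (Q::complex^'n^'n). P ** Q = mat 1 \<and> Q ** P = mat 1 \<and>
        (\<forall>k\<in>S. \<forall>i j. i \<noteq> j \<longrightarrow> (Q ** A k ** P) $ i $ j = 0))"

end

theory Submission
  imports Defs
begin

text \<open>
  Sufficiency (commuting maps are simultaneously linearizable): conjugating by the
  diagonalizing matrix makes every linear part a diagonal matrix D_k, and each map is then
  conjugate to lin_map D_k by a map tangent to the identity (tangent_conj).  By induction
  on the family, the next map, conjugated by the linearizer of the previous ones, commutes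
  with their linear normal forms; keeping only the resonant coefficients of its linearizer
  yields one that commutes with them as well (resonant_linearization).  Necessity: the
  linear conjugates have simultaneously diagonalizable, hence commuting, matrices, and
  commutation is invariant under conjugation.
\<close>

section \<open>Multi-indices\<close>

definition madd :: "'n mindex \<Rightarrow> 'n mindex \<Rightarrow> 'n mindex" where
  "madd a b = (\<lambda>i. a i + b i)"

definition lebox :: "('n::finite) mindex \<Rightarrow> 'n mindex set" where
  "lebox b = {a. \<forall>i. a i \<le> b i}"

definition spl :: "('n::finite) mindex \<Rightarrow> ('n mindex \<times> 'n mindex) set" where
  "spl b = {(x,y). madd x y = b}"

definition mbox :: "nat \<Rightarrow> ('n::finite) mindex set" where
  "mbox d = {a. mdeg a \<le> d}"

lemma finite_lebox[simp]: "finite (lebox (b::('n::finite) mindex))"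
proof -
  have "lebox b = PiE UNIV (\<lambda>i. {..b i})" by (auto simp: PiE_UNIV_domain lebox_def)
  then show ?thesis by (simp add: finite_PiE)
qed

lemma mdeg_ge_comp: "(a::('n::finite) mindex) i \<le> mdeg a"
  unfolding mdeg_def by (rule member_le_sum) auto

lemma box_sub_lebox: "mbox d \<subseteq> lebox (\<lambda>_. d)"
  unfolding mbox_def lebox_def using mdeg_ge_comp le_trans by blast

lemma finite_box[simp]: "finite (mbox d :: ('n::finite) mindex set)"
  using finite_subset[OF box_sub_lebox] by auto

lemma mdeg_madd[simp]: "mdeg (madd a b) = mdeg a + mdeg (b::('n::finite) mindex)"
  unfolding mdeg_def madd_def by (simp add: sum.distrib)

lemma mdeg_zero[simp]: "mdeg (\<lambda>_. 0 :: nat) = 0"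
  unfolding mdeg_def by simp

lemma mdeg_eq_0_iff: "mdeg (a::('n::finite) mindex) = 0 \<longleftrightarrow> a = (\<lambda>_. 0)"
  unfolding mdeg_def by (auto simp: fun_eq_iff)

lemma madd_0[simp]: "madd (\<lambda>_. 0) a = a" "madd a (\<lambda>_. 0) = a"
  by (auto simp: madd_def)

lemma madd_comm: "madd a b = madd b a" by (auto simp: madd_def)
lemma madd_assoc: "madd (madd a b) c = madd a (madd b c)" by (auto simp: madd_def)

lemma spl_sub: "spl b \<subseteq> lebox b \<times> lebox b"
  by (auto simp: spl_def lebox_def madd_def)

lemma finite_spl[simp]: "finite (spl (b::('n::finite) mindex))"
  using finite_subset[OF spl_sub] by auto

lemma mem_spl[simp]: "(x,y) \<in> spl b \<longleftrightarrow> madd x y = b"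
  by (simp add: spl_def)

lemma sum_Sigma_proj: "finite A \<Longrightarrow> (\<forall>x\<in>A. finite (B x)) \<Longrightarrow>
  (\<Sum>x\<in>A. \<Sum>y\<in>B x. f x y) = (\<Sum>p\<in>Sigma A B. f (fst p) (snd p))"
  using sum.Sigma[of A B f] by (simp add: case_prod_beta')

section \<open>The ring of formal power series\<close>

datatype 'n mser = Ser (cf: "'n mindex \<Rightarrow> complex")

lemma mser_eqI: "(\<And>b. cf s b = cf t b) \<Longrightarrow> s = t"
  by (rule mser.expand) auto

instantiation mser :: (finite) comm_ring_1
begin
definition "0 = Ser (\<lambda>_. 0)"
definition "1 = Ser (\<lambda>b. if b = (\<lambda>_. 0) then 1 else 0)"
definition "s + t = Ser (\<lambda>b. cf s b + cf t b)"
definition "s - t = Ser (\<lambda>b. cf s b - cf t b)"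
definition "- s = Ser (\<lambda>b. - cf s b)"
definition "s * t = Ser (\<lambda>b. \<Sum>(x,y)\<in>spl b. cf s x * cf t y)"

lemma cf_simps:
  "cf 0 b = 0" "cf 1 b = (if b = (\<lambda>_. 0) then 1 else 0)"
  "cf (s + t) b = cf s b + cf t b" "cf (s - t) b = cf s b - cf t b"
  "cf (- s) b = - cf s b" "cf (s * t) b = (\<Sum>(x,y)\<in>spl b. cf s x * cf t y)"
  by (simp_all add: zero_mser_def one_mser_def plus_mser_def minus_mser_def uminus_mser_def times_mser_def)

text \<open>Associativity: both bracketings expand to a sum over decompositions b = x + y + z.\<close>

definition trip :: "'a mindex \<Rightarrow> ('a mindex \<times> 'a mindex \<times> 'a mindex) set" where
  "trip b = {(x,y,z). madd (madd x y) z = b}"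

lemma assoc_left: "cf ((s*t)*u) b = (\<Sum>(x,y,z)\<in>trip b. cf s x * cf t y * cf u z)"
proof -
  have "cf ((s*t)*u) b = (\<Sum>(a,z)\<in>spl b. \<Sum>(x,y)\<in>spl a. cf s x * cf t y * cf u z)"
    by (simp add: cf_simps sum_distrib_right case_prod_unfold)
  also have "\<dots> = (\<Sum>((a,z),(x,y))\<in>Sigma (spl b) (\<lambda>(a,z). spl a). cf s x * cf t y * cf u z)"
    unfolding case_prod_unfold by (rule sum_Sigma_proj) auto
  also have "\<dots> = (\<Sum>(x,y,z)\<in>trip b. cf s x * cf t y * cf u z)"
    by (rule sum.reindex_bij_witness[where i="\<lambda>(x,y,z). ((madd x y, z),(x,y))"
          and j="\<lambda>((a,z),(x,y)). (x,y,z)"]) (auto simp: trip_def)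
  finally show ?thesis .
qed

lemma assoc_right: "cf (s*(t*u)) b = (\<Sum>(x,y,z)\<in>trip b. cf s x * cf t y * cf u z)"
proof -
  have "cf (s*(t*u)) b = (\<Sum>(x,a)\<in>spl b. \<Sum>(y,z)\<in>spl a. cf s x * cf t y * cf u z)"
    by (simp add: cf_simps sum_distrib_left case_prod_unfold mult.assoc)
  also have "\<dots> = (\<Sum>((x,a),(y,z))\<in>Sigma (spl b) (\<lambda>(x,a). spl a). cf s x * cf t y * cf u z)"
    unfolding case_prod_unfold by (rule sum_Sigma_proj) auto
  also have "\<dots> = (\<Sum>(x,y,z)\<in>trip b. cf s x * cf t y * cf u z)"
    by (rule sum.reindex_bij_witness[where i="\<lambda>(x,y,z). ((x, madd y z),(y,z))"
          and j="\<lambda>((x,a),(y,z)). (x,y,z)"]) (auto simp: trip_def madd_assoc)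
  finally show ?thesis .
qed

instance
proof
  fix s t u :: "'a mser"
  show "s * t * u = s * (t * u)" by (rule mser_eqI) (simp only: assoc_left assoc_right)
  show "s * t = t * s"
  proof (rule mser_eqI)
    fix b
    show "cf (s * t) b = cf (t * s) b" unfolding cf_simps
      by (rule sum.reindex_bij_witness[where i=prod.swap and j=prod.swap]) (auto simp: madd_comm)
  qed
  show "1 * s = s"
  proof (rule mser_eqI)
    fix b
    have "cf (1 * s) b = (\<Sum>p\<in>spl b. if p = ((\<lambda>_. 0), b) then cf s b else 0)"
      unfolding cf_simps by (rule sum.cong) (auto simp: madd_def split: if_splits)
    also have "\<dots> = cf s b" using sum.delta[OF finite_spl, of "((\<lambda>_. 0), b)" "\<lambda>_. cf s b"] by simp
    finally show "cf (1 * s) b = cf s b" .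
  qed
  show "(s + t) * u = s * u + t * u"
    by (rule mser_eqI) (simp add: cf_simps sum.distrib distrib_right case_prod_unfold)
  show "(0::'a mser) \<noteq> 1"
  proof
    assume "(0::'a mser) = 1"
    then have "cf 0 (\<lambda>_. 0) = cf (1::'a mser) (\<lambda>_. 0)" by simp
    then show False by (simp add: cf_simps)
  qed
qed (auto intro!: mser_eqI simp: cf_simps algebra_simps)
end

definition mmono :: "('n::finite) mindex \<Rightarrow> 'n mser" where
  "mmono a = Ser (\<lambda>b. if b = a then 1 else 0)"

definition mconst :: "complex \<Rightarrow> ('n::finite) mser" where
  "mconst c = Ser (\<lambda>b. if b = (\<lambda>_. 0) then c else 0)"

lemma cf_mono[simp]: "cf (mmono a) b = (if b = a then 1 else 0)" by (simp add: mmono_def)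
lemma cf_const[simp]: "cf (mconst c) b = (if b = (\<lambda>_. 0) then c else 0)" by (simp add: mconst_def)
lemma cf_const_mult: "cf (mconst c * s) b = c * cf s b"
proof -
  have "cf (mconst c * s) b = (\<Sum>p\<in>spl b. if p = ((\<lambda>_. 0), b) then c * cf s b else 0)"
    unfolding cf_simps by (rule sum.cong) (auto simp: madd_def split: if_splits)
  also have "\<dots> = c * cf s b"
    using sum.delta[OF finite_spl, of "((\<lambda>_. 0), b)" "\<lambda>_. c * cf s b"] by simp
  finally show ?thesis .
qed

lemma const_mult: "mconst a * mconst b = (mconst (a*b) :: ('n::finite) mser)"
  by (rule mser_eqI) (simp add: cf_const_mult)

lemma const_1[simp]: "mconst 1 = (1 :: ('n::finite) mser)"
  by (rule mser_eqI) (simp add: cf_simps)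

lemma const_power: "mconst a ^ k = (mconst (a ^ k) :: ('n::finite) mser)"
  by (induction k) (auto simp: const_mult)

lemma const_prod: "finite A \<Longrightarrow> (\<Prod>j\<in>A. mconst (f j)) = (mconst (\<Prod>j\<in>A. f j) :: ('n::finite) mser)"
  by (induction A rule: finite_induct) (auto simp: const_mult)

lemma mono_mult: "mmono a * mmono b = mmono (madd a b)"
proof (rule mser_eqI)
  fix c
  have "cf (mmono a * mmono b) c = (\<Sum>p\<in>spl c. if p = (a,b) then 1 else 0)"
    unfolding cf_simps by (rule sum.cong) (auto split: if_splits)
  also have "\<dots> = cf (mmono (madd a b)) c"
    using sum.delta[OF finite_spl, of "(a,b)" "\<lambda>_. 1::complex"] by auto
  finally show "cf (mmono a * mmono b) c = cf (mmono (madd a b)) c" .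
qed

lemma mono_0: "mmono (\<lambda>_. 0) = 1" by (rule mser_eqI) (simp add: cf_simps)

lemma mono_power: "mmono a ^ k = mmono (\<lambda>i. k * a i)"
  by (induction k) (auto simp: mono_0 mono_mult madd_def algebra_simps)

lemma mono_prod: "finite A \<Longrightarrow> (\<Prod>j\<in>A. mmono (f j)) = mmono (\<lambda>i. \<Sum>j\<in>A. f j i)"
  by (induction A rule: finite_induct) (auto simp: mono_0 mono_mult madd_def)

section \<open>Orders and agreement\<close>

text \<open>Both are compatible with products; this is what makes the
  inversion of tangent-to-identity maps converge degree by degree.\<close>

definition ord_ge :: "('n::finite) mser \<Rightarrow> nat \<Rightarrow> bool" where
  "ord_ge s k \<longleftrightarrow> (\<forall>b. mdeg b < k \<longrightarrow> cf s b = 0)"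

definition agree_below :: "nat \<Rightarrow> ('n::finite) mser \<Rightarrow> 'n mser \<Rightarrow> bool" where
  "agree_below D x y \<longleftrightarrow> (\<forall>b. mdeg b < D \<longrightarrow> cf x b = cf y b)"

lemma ord_ge_0[simp]: "ord_ge s 0" by (simp add: ord_ge_def)

lemma ord_ge_mult:
  fixes s t :: "('n::finite) mser"
  assumes "ord_ge s a" "ord_ge t c"
  shows "ord_ge (s*t) (a+c)"
  unfolding ord_ge_def cf_simps
proof (intro allI impI sum.neutral ballI)
  fix b and p :: "'n mindex \<times> 'n mindex" assume b: "mdeg b < a + c" and p: "p \<in> spl b"
  obtain x y where [simp]: "p = (x,y)" by fastforce
  from p have "mdeg x + mdeg y = mdeg b" by (auto simp flip: mdeg_madd)
  then have "mdeg x < a \<or> mdeg y < c" using b by linarith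
  then show "(case p of (x, y) \<Rightarrow> cf s x * cf t y) = 0" using assms by (auto simp: ord_ge_def)
qed

lemma ord_ge_power: "ord_ge s a \<Longrightarrow> ord_ge (s^k) (k*a)"
  by (induction k) (auto dest: ord_ge_mult)

lemma ord_ge_prod: "finite A \<Longrightarrow> (\<And>j. j\<in>A \<Longrightarrow> ord_ge (f j) (k j)) \<Longrightarrow> ord_ge (\<Prod>j\<in>A. f j) (\<Sum>j\<in>A. k j)"
  by (induction A rule: finite_induct) (auto intro: ord_ge_mult)

lemma agree_below_mult:
  fixes x y x' y' :: "('n::finite) mser"
  assumes "agree_below D1 x x'" "agree_below D2 y y'" "ord_ge x a" "ord_ge x' a" "ord_ge y c" "ord_ge y' c"
  shows "agree_below (min (D1 + c) (D2 + a)) (x*y) (x'*y')"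
  unfolding agree_below_def cf_simps
proof (intro allI impI sum.cong refl)
  fix b and p :: "'n mindex \<times> 'n mindex" assume b: "mdeg b < min (D1 + c) (D2 + a)" and p: "p \<in> spl b"
  obtain u v where [simp]: "p = (u,v)" by fastforce
  from p have d: "mdeg u + mdeg v = mdeg b" by (auto simp flip: mdeg_madd)
  show "(case p of (x1, y1) \<Rightarrow> cf x x1 * cf y y1) = (case p of (x, y) \<Rightarrow> cf x' x * cf y' y)"
  proof (cases "mdeg u < a \<or> mdeg v < c")
    case True then show ?thesis using assms by (auto simp: ord_ge_def)
  next
    case False
    then have "mdeg u < D1" "mdeg v < D2" using d b by linarith+
    then show ?thesis using assms by (auto simp: agree_below_def)
  qed
qed

lemma agree_below_power:
  assumes "agree_below (d+1) x x'" "ord_ge x 1" "ord_ge x' 1"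
  shows "agree_below (d+k) (x^k) (x'^k) \<and> ord_ge (x^k) k \<and> ord_ge (x'^k) k"
proof (induction k)
  case 0 then show ?case by (simp add: agree_below_def)
next
  case (Suc k)
  then have "agree_below (min (d+1+k) (d+k+1)) (x * x^k) (x' * x'^k)"
    using agree_below_mult[OF assms(1) _ assms(2,3)] by blast
  moreover have "ord_ge (x * x^k) (1+k)" by (rule ord_ge_mult) (use Suc assms in auto)
  moreover have "ord_ge (x' * x'^k) (1+k)" by (rule ord_ge_mult) (use Suc assms in auto)
  ultimately show ?case by (simp add: add.commute add.left_commute)
qed

lemma agree_below_prod:
  assumes "finite A" "\<And>j. j\<in>A \<Longrightarrow> agree_below (d+1) (x j) (x' j) \<and> ord_ge (x j) 1 \<and> ord_ge (x' j) 1"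
  shows "agree_below (d + (\<Sum>j\<in>A. k j)) (\<Prod>j\<in>A. x j ^ k j) (\<Prod>j\<in>A. x' j ^ k j)
     \<and> ord_ge (\<Prod>j\<in>A. x j ^ k j) (\<Sum>j\<in>A. k j) \<and> ord_ge (\<Prod>j\<in>A. x' j ^ k j) (\<Sum>j\<in>A. k j)"
  using assms
proof (induction A rule: finite_induct)
  case empty then show ?case by (simp add: agree_below_def)
next
  case (insert a A)
  let ?P = "\<Prod>j\<in>A. x j ^ k j" and ?P' = "\<Prod>j\<in>A. x' j ^ k j" and ?S = "\<Sum>j\<in>A. k j"
  have IH: "agree_below (d + ?S) ?P ?P'" "ord_ge ?P ?S" "ord_ge ?P' ?S" using insert by auto
  have X: "agree_below (d + k a) (x a ^ k a) (x' a ^ k a)" "ord_ge (x a ^ k a) (k a)" "ord_ge (x' a ^ k a) (k a)"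
    using agree_below_power[of d "x a" "x' a" "k a"] insert.prems by auto
  have "agree_below (min (d + k a + ?S) (d + ?S + k a)) (x a ^ k a * ?P) (x' a ^ k a * ?P')"
    by (rule agree_below_mult[OF X(1) IH(1) X(2,3) IH(2,3)])
  moreover have "ord_ge (x a ^ k a * ?P) (k a + ?S)" by (rule ord_ge_mult) (use X IH in auto)
  moreover have "ord_ge (x' a ^ k a * ?P') (k a + ?S)" by (rule ord_ge_mult) (use X IH in auto)
  ultimately show ?case using insert.hyps by (simp add: add.commute add.left_commute)
qed

text \<open>Coefficients of a finite product: the exponent b is distributed over the factors in all
  possible ways.  decomp I b is the set of such distributions (extensional on I).\<close>

definition decomp :: "'p set \<Rightarrow> ('n::finite) mindex \<Rightarrow> ('p \<Rightarrow> 'n mindex) set" where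
  "decomp I b = {\<gamma> \<in> PiE I (\<lambda>_. {m. \<forall>i. m i \<le> b i}). (\<lambda>i. \<Sum>p\<in>I. \<gamma> p i) = b}"

lemma finite_decomp: "finite I \<Longrightarrow> finite (decomp I (v::('n::finite) mindex))"
proof -
  assume I: "finite I"
  have "decomp I v \<subseteq> PiE I (\<lambda>_. lebox v)" by (auto simp: decomp_def lebox_def)
  moreover have "finite (PiE I (\<lambda>_. lebox v))" using I by (simp add: finite_PiE)
  ultimately show ?thesis by (rule finite_subset)
qed

lemma decomp_empty: "decomp {} b = (if b = (\<lambda>_. 0) then {\<lambda>_. undefined} else {})"
  by (auto simp: decomp_def PiE_empty_domain)

lemma decomp_insert_upd:
  assumes I: "finite I" "a \<notin> I" and \<gamma>: "\<gamma> \<in> decomp I v" and uv: "madd u v = b"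
  shows "\<gamma>(a := u) \<in> decomp (insert a I) b"
proof -
  have g: "\<gamma> \<in> PiE I (\<lambda>_. {m. \<forall>i. m i \<le> v i})" "(\<lambda>i. \<Sum>p\<in>I. \<gamma> p i) = v"
    using \<gamma> by (auto simp: decomp_def)
  have "u i \<le> b i" "v i \<le> b i" for i using uv unfolding madd_def fun_eq_iff by (metis le_add1 le_add2)+
  then have "\<gamma>(a:=u) \<in> PiE (insert a I) (\<lambda>_. {m. \<forall>i. m i \<le> b i})"
    using g(1) by (auto intro!: fun_upd_in_PiE simp: PiE_def Pi_def extensional_def; meson le_trans)
  moreover have "(\<lambda>i. \<Sum>p\<in>I. (\<gamma>(a:=u)) p i) = v"
    using g(2) I(2) by (auto intro!: sum.cong)
  then have "(\<lambda>i. \<Sum>p\<in>insert a I. (\<gamma>(a:=u)) p i) = b"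
    using uv I by (auto simp: madd_def fun_eq_iff)
  ultimately show ?thesis by (simp add: decomp_def)
qed

lemma decomp_insert_restrict:
  assumes I: "finite I" "a \<notin> I" and \<gamma>: "\<gamma> \<in> decomp (insert a I) b"
  shows "restrict \<gamma> I \<in> decomp I (\<lambda>i. \<Sum>p\<in>I. \<gamma> p i)"
    and "madd (\<gamma> a) (\<lambda>i. \<Sum>p\<in>I. \<gamma> p i) = b"
proof -
  have gs: "(\<lambda>i. \<Sum>p\<in>insert a I. \<gamma> p i) = b" using \<gamma> by (auto simp: decomp_def)
  show "madd (\<gamma> a) (\<lambda>i. \<Sum>p\<in>I. \<gamma> p i) = b"
    using gs I by (auto simp: madd_def fun_eq_iff)
  show "restrict \<gamma> I \<in> decomp I (\<lambda>i. \<Sum>p\<in>I. \<gamma> p i)"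
    unfolding decomp_def using I(1)
    by (auto simp: PiE_def extensional_def intro: member_le_sum intro!: sum.cong)
qed

lemma cf_prod:
  fixes F :: "'p \<Rightarrow> ('n::finite) mser"
  assumes "finite I"
  shows "cf (\<Prod>p\<in>I. F p) b = (\<Sum>\<gamma>\<in>decomp I b. \<Prod>p\<in>I. cf (F p) (\<gamma> p))"
  using assms
proof (induction I arbitrary: b rule: finite_induct)
  case empty
  then show ?case by (cases "b = (\<lambda>_. 0)") (simp_all add: cf_simps decomp_empty)
next
  case (insert a I)
  let ?S = "Sigma (spl b) (\<lambda>q. decomp I (snd q))"
  have "cf (\<Prod>p\<in>insert a I. F p) b = cf (F a * (\<Prod>p\<in>I. F p)) b"
    using insert.hyps by simp
  also have "\<dots> = (\<Sum>q\<in>spl b. \<Sum>\<gamma>\<in>decomp I (snd q). cf (F a) (fst q) * (\<Prod>p\<in>I. cf (F p) (\<gamma> p)))"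
    unfolding cf_simps insert.IH by (simp add: case_prod_unfold sum_distrib_left)
  also have "\<dots> = (\<Sum>x\<in>?S. cf (F a) (fst (fst x)) * (\<Prod>p\<in>I. cf (F p) (snd x p)))"
    by (rule sum_Sigma_proj) (auto simp: finite_decomp insert.hyps)
  also have "\<dots> = (\<Sum>\<gamma>\<in>decomp (insert a I) b. \<Prod>p\<in>insert a I. cf (F p) (\<gamma> p))"
  proof (rule sum.reindex_bij_witness[where j="\<lambda>x. (snd x)(a := fst (fst x))"
        and i="\<lambda>\<gamma>. ((\<gamma> a, \<lambda>i. \<Sum>p\<in>I. \<gamma> p i), restrict \<gamma> I)"])
    fix x assume x: "x \<in> ?S"
    obtain u v \<gamma> where xe: "x = ((u,v),\<gamma>)" by (metis prod.collapse)
    have g: "\<gamma> \<in> decomp I v" "madd u v = b" using x by (auto simp: xe)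
    have ext: "\<gamma> \<in> extensional I" "(\<lambda>i. \<Sum>p\<in>I. \<gamma> p i) = v" using g(1) by (auto simp: decomp_def PiE_def)
    have "(\<lambda>i. \<Sum>p\<in>I. (\<gamma>(a:=u)) p i) = v"
      unfolding ext(2)[symmetric] using insert.hyps(2) by (auto intro!: sum.cong)
    moreover have "restrict (\<gamma>(a:=u)) I = \<gamma>"
      using ext(1) insert.hyps(2) by (auto simp: restrict_def fun_eq_iff extensional_def)
    ultimately show "(\<lambda>\<gamma>. ((\<gamma> a, \<lambda>i. \<Sum>p\<in>I. \<gamma> p i), restrict \<gamma> I)) ((snd x)(a := fst (fst x))) = x"
      by (simp add: xe)
    show "(snd x)(a := fst (fst x)) \<in> decomp (insert a I) b"
      using decomp_insert_upd[OF insert.hyps g] by (simp add: xe)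
    show "(\<Prod>p\<in>insert a I. cf (F p) (((snd x)(a := fst (fst x))) p)) =
          cf (F a) (fst (fst x)) * (\<Prod>p\<in>I. cf (F p) (snd x p))"
      using insert.hyps by (auto simp: xe intro!: prod.cong)
  next
    fix \<gamma> assume g: "\<gamma> \<in> decomp (insert a I) b"
    then show "(snd ((\<gamma> a, \<lambda>i. \<Sum>p\<in>I. \<gamma> p i), restrict \<gamma> I))
        (a := fst (fst ((\<gamma> a, \<lambda>i. \<Sum>p\<in>I. \<gamma> p i), restrict \<gamma> I))) = \<gamma>"
      by (auto simp: fun_eq_iff restrict_def decomp_def PiE_def extensional_def)
    show "((\<gamma> a, \<lambda>i. \<Sum>p\<in>I. \<gamma> p i), restrict \<gamma> I) \<in> ?S"
      using decomp_insert_restrict[OF insert.hyps g] by simp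
  qed
  finally show ?case .
qed

section \<open>Substitution and composition\<close>

definition monpow :: "('n::finite) fmap \<Rightarrow> 'n mindex \<Rightarrow> 'n mser" where
  "monpow G a = (\<Prod>j\<in>UNIV. Ser (G j) ^ a j)"

lemma fm_monpow_coeff_eq: "fm_monpow_coeff G a b = cf (monpow G a) b"
proof -
  let ?I = "{(j, k). k < a j}"
  have I: "?I = Sigma UNIV (\<lambda>j. {..<a j})" by auto
  have fI: "finite ?I" unfolding I by auto
  have "monpow G a = (\<Prod>j\<in>UNIV. \<Prod>k\<in>{..<a j}. Ser (G j))" by (simp add: monpow_def)
  also have "\<dots> = (\<Prod>p\<in>?I. Ser (G (fst p)))" unfolding I
    by (subst prod.Sigma) (auto simp: case_prod_unfold)
  finally have "monpow G a = (\<Prod>p\<in>?I. Ser (G (fst p)))" .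
  then show ?thesis unfolding fm_monpow_coeff_def Let_def
    by (simp add: cf_prod[OF fI] decomp_def)
qed

lemma monpow_0[simp]: "monpow G (\<lambda>_. 0) = 1" by (simp add: monpow_def)

lemma monpow_unit: "monpow G (unit_mindex j) = Ser (G j)"
proof -
  have "monpow G (unit_mindex j) = (\<Prod>i\<in>UNIV. if i = j then Ser (G i) else 1)"
    unfolding monpow_def unit_mindex_def by (rule prod.cong) auto
  then show ?thesis by simp
qed

lemma monpow_madd: "monpow G (madd a b) = monpow G a * monpow G b"
  by (simp add: monpow_def madd_def power_add prod.distrib)

lemma ord_ge_Ser: "fixes_origin G \<Longrightarrow> ord_ge (Ser (G j)) 1"
  by (auto simp: ord_ge_def fixes_origin_def mdeg_eq_0_iff)

lemma ord_ge_monpow: "fixes_origin G \<Longrightarrow> ord_ge (monpow G a) (mdeg a)"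
  unfolding monpow_def mdeg_def
  using ord_ge_prod[of UNIV "\<lambda>j. Ser (G j) ^ a j" "\<lambda>j. a j"] ord_ge_power[OF ord_ge_Ser, of G]
  by simp

definition agree_upto :: "nat \<Rightarrow> ('n::finite) fmap \<Rightarrow> 'n fmap \<Rightarrow> bool" where
  "agree_upto d G G' \<longleftrightarrow> (\<forall>j b. mdeg b \<le> d \<longrightarrow> G j b = G' j b)"

lemma agree_below_monpow:
  assumes "fixes_origin G" "fixes_origin G'" "agree_upto d G G'"
  shows "agree_below (d + mdeg a) (monpow G a) (monpow G' a)"
proof -
  have "agree_below (d+1) (Ser (G j)) (Ser (G' j)) \<and> ord_ge (Ser (G j)) 1 \<and> ord_ge (Ser (G' j)) 1" for j
    using assms ord_ge_Ser[OF assms(1), of j] ord_ge_Ser[OF assms(2), of j]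
    by (auto simp: agree_below_def agree_upto_def)
  then show ?thesis unfolding monpow_def mdeg_def
    using agree_below_prod[of UNIV d "\<lambda>j. Ser (G j)" "\<lambda>j. Ser (G' j)" a] by simp
qed

text \<open>Substitution s \<mapsto> s \<circ> H of a map H without constant term.  Only exponents of degree
  at most deg b contribute to the coefficient of z^b, so the defining sum is finite.\<close>

definition subst :: "('n::finite) fmap \<Rightarrow> 'n mser \<Rightarrow> 'n mser" where
  "subst H s = Ser (\<lambda>b. \<Sum>a\<in>mbox (mdeg b). cf s a * cf (monpow H a) b)"

lemma fm_comp_subst: "fm_comp F G i = cf (subst G (Ser (F i)))"
  by (simp add: fm_comp_def subst_def mbox_def fm_monpow_coeff_eq fun_eq_iff)

lemma fm_comp_eq_subst: "fm_comp F G = (\<lambda>i. cf (subst G (Ser (F i))))"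
  by (simp add: fm_comp_subst fun_eq_iff)

lemma cf_subst: "cf (subst H s) b = (\<Sum>a\<in>mbox (mdeg b). cf s a * cf (monpow H a) b)"
  by (simp add: subst_def)

lemma subst_ext:
  assumes "fixes_origin H" "finite A" "mbox (mdeg b) \<subseteq> A"
  shows "cf (subst H s) b = (\<Sum>a\<in>A. cf s a * cf (monpow H a) b)"
  unfolding cf_subst
proof (rule sum.mono_neutral_left[OF assms(2,3)], intro ballI)
  fix a assume "a \<in> A - mbox (mdeg b)"
  then have "mdeg b < mdeg a" by (auto simp: mbox_def)
  then show "cf s a * cf (monpow H a) b = 0" using ord_ge_monpow[OF assms(1)] by (simp add: ord_ge_def)
qed

lemma subst_add: "subst H (s + t) = subst H s + subst H t"
  by (rule mser_eqI) (simp add: cf_subst cf_simps distrib_right sum.distrib)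

lemma subst_const_mult: "subst H (mconst c * s) = mconst c * subst H s"
  by (rule mser_eqI) (simp add: cf_subst cf_const_mult sum_distrib_left mult.assoc)

lemma subst_one: "subst H 1 = 1"
proof (rule mser_eqI)
  fix b :: "'a mindex"
  have "cf (subst H 1) b = (\<Sum>a\<in>mbox (mdeg b). if a = (\<lambda>_. 0) then cf (monpow H a) b else 0)"
    unfolding cf_subst cf_simps by (rule sum.cong) auto
  also have "\<dots> = cf (monpow H (\<lambda>_. 0)) b" by (subst sum.delta[OF finite_box]) (simp add: mbox_def)
  finally show "cf (subst H 1) b = cf 1 b" by simp
qed

text \<open>Multiplicativity of substitution: expanding both sides over pairs of exponents of
  degree at most deg b (higher ones contribute nothing by the order bound).\<close>

lemma cf_subst_mult:
  fixes H :: "('n::finite) fmap" and b :: "'n mindex"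
  assumes H: "fixes_origin H"
  defines "B \<equiv> mbox (mdeg b)"
  shows "cf (subst H (s * t)) b =
    (\<Sum>x\<in>B. \<Sum>y\<in>B. cf s x * cf t y * cf (monpow H x * monpow H y) b)"
proof -
  let ?M = "monpow H"
  have fB: "finite B" by (simp add: B_def)
  have "cf (subst H (s * t)) b = (\<Sum>a\<in>B. \<Sum>q\<in>spl a. cf s (fst q) * cf t (snd q) * cf (?M a) b)"
    unfolding cf_subst cf_simps B_def by (simp add: sum_distrib_right case_prod_unfold)
  also have "\<dots> = (\<Sum>x\<in>Sigma B spl. cf s (fst (snd x)) * cf t (snd (snd x)) * cf (?M (fst x)) b)"
    by (rule sum_Sigma_proj) (auto simp: fB)
  also have "\<dots> = (\<Sum>q\<in>{q\<in>B \<times> B. mdeg (fst q) + mdeg (snd q) \<le> mdeg b}.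
                     cf s (fst q) * cf t (snd q) * cf (?M (madd (fst q) (snd q))) b)"
    by (rule sum.reindex_bij_witness[where j="\<lambda>x. snd x" and i="\<lambda>q. (madd (fst q) (snd q), q)"])
       (auto simp: B_def mbox_def)
  also have "\<dots> = (\<Sum>q\<in>B \<times> B. cf s (fst q) * cf t (snd q) * cf (?M (madd (fst q) (snd q))) b)"
  proof (rule sum.mono_neutral_left)
    \<comment> \<open>the added terms vanish since G^a has order at least deg a\<close>
    have "cf (?M (madd x y)) b = 0" if "\<not> mdeg x + mdeg y \<le> mdeg b" for x y
      using ord_ge_monpow[OF H, of "madd x y"] that by (simp add: ord_ge_def)
    then show "\<forall>q\<in>B \<times> B - {q \<in> B \<times> B. mdeg (fst q) + mdeg (snd q) \<le> mdeg b}.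
        cf s (fst q) * cf t (snd q) * cf (?M (madd (fst q) (snd q))) b = 0" by auto
  qed (auto simp: fB)
  also have "\<dots> = (\<Sum>x\<in>B. \<Sum>y\<in>B. cf s x * cf t y * cf (?M x * ?M y) b)"
    by (simp add: sum.cartesian_product monpow_madd case_prod_unfold)
  finally show ?thesis .
qed

lemma subst_mult:
  fixes H :: "('n::finite) fmap"
  assumes H: "fixes_origin H"
  shows "subst H (s * t) = subst H s * subst H t"
proof (rule mser_eqI)
  fix b :: "'n mindex"
  define B where "B = (mbox (mdeg b) :: 'n mindex set)"
  let ?M = "monpow H"
  have fB: "finite B" by (simp add: B_def)
  have "cf (subst H (s * t)) b = (\<Sum>x\<in>B. \<Sum>y\<in>B. cf s x * cf t y * cf (?M x * ?M y) b)"
    unfolding B_def by (rule cf_subst_mult[OF H])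
  also have "\<dots> = (\<Sum>x\<in>B. \<Sum>y\<in>B. \<Sum>q\<in>spl b. cf s x * cf (?M x) (fst q) * (cf t y * cf (?M y) (snd q)))"
    unfolding cf_simps by (simp add: sum_distrib_left case_prod_unfold algebra_simps)
  also have "\<dots> = (\<Sum>q\<in>spl b. \<Sum>x\<in>B. \<Sum>y\<in>B. cf s x * cf (?M x) (fst q) * (cf t y * cf (?M y) (snd q)))"
    by (simp only: sum.swap[of _ B "spl b"])
  also have "\<dots> = (\<Sum>q\<in>spl b. cf (subst H s) (fst q) * cf (subst H t) (snd q))"
  proof (rule sum.cong[OF refl])
    fix q assume q: "q \<in> spl b"
    then have "mdeg (fst q) \<le> mdeg b" "mdeg (snd q) \<le> mdeg b"
      by (auto simp: spl_def)
    then have "mbox (mdeg (fst q)) \<subseteq> B" "mbox (mdeg (snd q)) \<subseteq> B" by (auto simp: B_def mbox_def)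
    then show "(\<Sum>x\<in>B. \<Sum>y\<in>B. cf s x * cf (?M x) (fst q) * (cf t y * cf (?M y) (snd q))) =
        cf (subst H s) (fst q) * cf (subst H t) (snd q)"
      by (simp add: subst_ext[OF H fB] sum_product)
  qed
  also have "\<dots> = cf (subst H s * subst H t) b" by (simp add: cf_simps case_prod_unfold)
  finally show "cf (subst H (s * t)) b = cf (subst H s * subst H t) b" .
qed

lemma subst_power: "fixes_origin H \<Longrightarrow> subst H (s ^ k) = subst H s ^ k"
  by (induction k) (auto simp: subst_one subst_mult)

lemma subst_prod: "finite A \<Longrightarrow> fixes_origin H \<Longrightarrow> subst H (\<Prod>j\<in>A. f j) = (\<Prod>j\<in>A. subst H (f j))"
  by (induction A rule: finite_induct) (auto simp: subst_one subst_mult)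

lemma subst_sum: "finite A \<Longrightarrow> subst H (\<Sum>j\<in>A. f j) = (\<Sum>j\<in>A. subst H (f j))"
proof (induction A rule: finite_induct)
  case empty
  show ?case by (rule mser_eqI) (simp add: cf_subst cf_simps)
qed (auto simp: subst_add)

lemma monpow_subst:
  "fixes_origin H \<Longrightarrow> subst H (monpow G a) = monpow (\<lambda>j. cf (subst H (Ser (G j)))) a"
  by (simp add: monpow_def subst_prod subst_power)

lemma fixes_origin_comp[simp]: "fixes_origin G \<Longrightarrow> fixes_origin (fm_comp G H)"
  unfolding fixes_origin_def fm_comp_subst cf_subst
  by (simp add: mbox_def mdeg_eq_0_iff)

lemma subst_subst:
  fixes G H :: "('n::finite) fmap"
  assumes G: "fixes_origin G" and H: "fixes_origin H"
  shows "subst H (subst G s) = subst (fm_comp G H) s"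
proof (rule mser_eqI)
  fix b :: "'n mindex"
  define B where "B = (mbox (mdeg b) :: 'n mindex set)"
  have fB: "finite B" by (simp add: B_def)
  have "cf (subst H (subst G s)) b = (\<Sum>a\<in>B. (\<Sum>x\<in>B. cf s x * cf (monpow G x) a) * cf (monpow H a) b)"
    unfolding cf_subst[of H "subst G s" b] B_def[symmetric]
  proof (rule sum.cong[OF refl])
    fix a assume "a \<in> B"
    then have "mbox (mdeg a) \<subseteq> B" by (auto simp: B_def mbox_def)
    then show "cf (subst G s) a * cf (monpow H a) b = (\<Sum>x\<in>B. cf s x * cf (monpow G x) a) * cf (monpow H a) b"
      by (simp add: subst_ext[OF G fB])
  qed
  also have "\<dots> = (\<Sum>a\<in>B. \<Sum>x\<in>B. cf s x * cf (monpow G x) a * cf (monpow H a) b)"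
    by (simp add: sum_distrib_right)
  also have "\<dots> = (\<Sum>x\<in>B. \<Sum>a\<in>B. cf s x * cf (monpow G x) a * cf (monpow H a) b)"
    by (rule sum.swap)
  also have "\<dots> = (\<Sum>x\<in>B. cf s x * (\<Sum>a\<in>B. cf (monpow G x) a * cf (monpow H a) b))"
    by (simp add: sum_distrib_left mult.assoc)
  also have "\<dots> = (\<Sum>x\<in>B. cf s x * cf (subst H (monpow G x)) b)"
    by (simp add: cf_subst B_def)
  also have "\<dots> = cf (subst (fm_comp G H) s) b"
    by (simp add: monpow_subst[OF H] cf_subst B_def fm_comp_eq_subst)
  finally show "cf (subst H (subst G s)) b = cf (subst (fm_comp G H) s) b" .
qed

lemma fm_comp_assoc:
  "fixes_origin G \<Longrightarrow> fixes_origin H \<Longrightarrow> fm_comp (fm_comp F G) H = fm_comp F (fm_comp G H)"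
  by (simp add: fm_comp_eq_subst subst_subst)

lemma Ser_fm_id: "Ser (fm_id j) = mmono (unit_mindex j)"
  by (rule mser_eqI) (simp add: fm_id_def)

lemma monpow_id: "monpow fm_id a = mmono a"
proof -
  have "monpow fm_id a = (\<Prod>j\<in>UNIV. mmono (\<lambda>i. a j * unit_mindex j i))"
    by (simp add: monpow_def Ser_fm_id mono_power)
  also have "\<dots> = mmono (\<lambda>i. \<Sum>j\<in>UNIV. a j * unit_mindex j i)" by (simp add: mono_prod)
  also have "(\<lambda>i. \<Sum>j\<in>UNIV. a j * unit_mindex j i) = a"
    by (simp add: unit_mindex_def fun_eq_iff if_distrib cong: if_cong)
  finally show ?thesis .
qed

lemma subst_id: "subst fm_id s = s"
proof (rule mser_eqI)
  fix b
  have "cf (subst fm_id s) b = (\<Sum>a\<in>mbox (mdeg b). if a = b then cf s b else 0)"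
    unfolding cf_subst monpow_id by (rule sum.cong) auto
  also have "\<dots> = cf s b" by (subst sum.delta[OF finite_box]) (simp add: mbox_def)
  finally show "cf (subst fm_id s) b = cf s b" .
qed

lemma fm_comp_id_right[simp]: "fm_comp F fm_id = F"
  by (simp add: fm_comp_eq_subst subst_id)

lemma subst_mono_unit: "fixes_origin H \<Longrightarrow> subst H (mmono (unit_mindex j)) = Ser (H j)"
proof (rule mser_eqI)
  fix b assume H: "fixes_origin H"
  have "cf (subst H (mmono (unit_mindex j))) b
      = (\<Sum>a\<in>insert (unit_mindex j) (mbox (mdeg b)). cf (mmono (unit_mindex j)) a * cf (monpow H a) b)"
    by (rule subst_ext[OF H]) auto
  also have "\<dots> = (\<Sum>a\<in>insert (unit_mindex j) (mbox (mdeg b)). if a = unit_mindex j then cf (monpow H a) b else 0)"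
    by (rule sum.cong) auto
  also have "\<dots> = cf (monpow H (unit_mindex j)) b"
    by (subst sum.delta) auto
  finally show "cf (subst H (mmono (unit_mindex j))) b = cf (Ser (H j)) b" by (simp add: monpow_unit)
qed

lemma fm_comp_id_left: "fixes_origin F \<Longrightarrow> fm_comp fm_id F = F"
  by (simp add: fm_comp_eq_subst Ser_fm_id subst_mono_unit)

lemma fixes_origin_id[simp]: "fixes_origin fm_id"
  by (simp add: fixes_origin_def fm_id_def unit_mindex_def fun_eq_iff)

section \<open>Linear maps and linear parts\<close>

lemma unit_mindex_inj[simp]: "unit_mindex i = unit_mindex j \<longleftrightarrow> i = j"
  by (auto simp: unit_mindex_def fun_eq_iff)

lemma unit_ne_0[simp]: "unit_mindex j \<noteq> (\<lambda>_. 0)" "(\<lambda>_. 0) \<noteq> unit_mindex j"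
  by (auto simp: unit_mindex_def fun_eq_iff)

lemma mdeg_unit[simp]: "mdeg (unit_mindex (j::'n::finite)) = 1"
  by (simp add: mdeg_def unit_mindex_def)

lemma mdeg_le1:
  assumes "mdeg (b::('n::finite) mindex) \<le> 1"
  shows "b = (\<lambda>_. 0) \<or> (\<exists>j. b = unit_mindex j)"
proof (cases "b = (\<lambda>_. 0)")
  case False
  then obtain j where j: "b j \<noteq> 0" by auto
  have bj: "b j = 1" using j mdeg_ge_comp[of b j] assms by linarith
  have "b i = 0" if "i \<noteq> j" for i
  proof -
    have "b i + b j = (\<Sum>k\<in>{i,j}. b k)" using that by simp
    also have "\<dots> \<le> mdeg b" unfolding mdeg_def by (rule sum_mono2) auto
    finally show ?thesis using assms bj by linarith
  qed
  then have "b = unit_mindex j" using bj by (auto simp: unit_mindex_def fun_eq_iff)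
  then show ?thesis by blast
qed simp

lemma box1: "mbox 1 \<subseteq> insert (\<lambda>_. 0) (range unit_mindex)"
  using mdeg_le1 by (auto simp: mbox_def)

lemma cf_sum: "finite A \<Longrightarrow> cf (\<Sum>j\<in>A. f j) b = (\<Sum>j\<in>A. cf (f j) b)"
  by (induction A rule: finite_induct) (auto simp: cf_simps)

definition lin_map :: "complex^('n::finite)^'n \<Rightarrow> 'n fmap" where
  "lin_map A = (\<lambda>i b. \<Sum>j\<in>UNIV. if b = unit_mindex j then A$i$j else 0)"

lemma lin_map_unit[simp]: "lin_map A i (unit_mindex j) = A$i$j"
  by (simp add: lin_map_def)

lemma lin_map_nonunit: "(\<forall>j. b \<noteq> unit_mindex j) \<Longrightarrow> lin_map A i b = 0"
  by (simp add: lin_map_def)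

lemma fixes_origin_lin_map[simp]: "fixes_origin (lin_map A)"
  by (simp add: fixes_origin_def lin_map_def)

lemma fm_linear_lin_map[simp]: "fm_linear (lin_map A)"
  by (auto simp: fm_linear_def intro!: lin_map_nonunit)

lemma lin_part_lin_map[simp]: "lin_part (lin_map A) = A"
  by (simp add: lin_part_def)

lemma linear_eq_lin_map: "fm_linear L \<Longrightarrow> L = lin_map (lin_part L)"
proof (intro ext)
  fix i b assume L: "fm_linear L"
  show "L i b = lin_map (lin_part L) i b"
  proof (cases "\<exists>j. b = unit_mindex j")
    case True then show ?thesis by (auto simp: lin_part_def)
  next
    case False
    then have "mdeg b \<noteq> 1" using mdeg_le1[of b] by (auto simp: mdeg_eq_0_iff)
    then show ?thesis using L False by (simp add: fm_linear_def lin_map_nonunit)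
  qed
qed

lemma Ser_lin_map: "Ser (lin_map A i) = (\<Sum>j\<in>UNIV. mconst (A$i$j) * mmono (unit_mindex j))"
  by (rule mser_eqI) (auto simp: cf_sum cf_const_mult lin_map_def intro!: sum.cong)

lemma comp_lin_left:
  assumes "fixes_origin H"
  shows "fm_comp (lin_map A) H i b = (\<Sum>j\<in>UNIV. A$i$j * H j b)"
  by (simp add: fm_comp_subst Ser_lin_map subst_sum subst_const_mult subst_mono_unit[OF assms]
      cf_sum cf_const_mult)

lemma lin_map_comp: "fm_comp (lin_map A) (lin_map B) = lin_map (A ** B)"
proof (intro ext)
  fix i b
  show "fm_comp (lin_map A) (lin_map B) i b = lin_map (A ** B) i b"
    unfolding comp_lin_left[OF fixes_origin_lin_map]
  proof (cases "\<exists>k. b = unit_mindex k")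
    case True
    then obtain k where "b = unit_mindex k" by blast
    then show "(\<Sum>j\<in>UNIV. A $ i $ j * lin_map B j b) = lin_map (A ** B) i b"
      by (simp add: matrix_matrix_mult_def)
  next
    case False
    then show "(\<Sum>j\<in>UNIV. A $ i $ j * lin_map B j b) = lin_map (A ** B) i b"
      by (simp add: lin_map_nonunit)
  qed
qed

lemma lin_map_1: "lin_map (mat 1) = fm_id"
proof (intro ext)
  fix i b
  show "lin_map (mat 1) i b = fm_id i b"
  proof (cases "\<exists>k. b = unit_mindex k")
    case True
    then obtain k where "b = unit_mindex k" by blast
    then show ?thesis by (simp add: mat_def fm_id_def)
  next
    case False
    then show ?thesis by (auto simp add: lin_map_nonunit fm_id_def)
  qed
qed

lemma lin_part_id: "lin_part fm_id = mat 1"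
  by (simp add: lin_part_def fm_id_def mat_def vec_eq_iff)

lemma lin_part_comp:
  assumes F: "fixes_origin F" and G: "fixes_origin G"
  shows "lin_part (fm_comp F G) = lin_part F ** lin_part G"
proof -
  have "fm_comp F G i (unit_mindex k) = (\<Sum>j\<in>UNIV. F i (unit_mindex j) * G j (unit_mindex k))" for i k
  proof -
    have "fm_comp F G i (unit_mindex k) =
        (\<Sum>a\<in>insert (\<lambda>_. 0) (range unit_mindex). cf (Ser (F i)) a * cf (monpow G a) (unit_mindex k))"
      unfolding fm_comp_subst by (rule subst_ext[OF G]) (use box1 in auto)
    also have "\<dots> = (\<Sum>a\<in>insert (\<lambda>_. 0) (range unit_mindex). F i a * cf (monpow G a) (unit_mindex k))"
      by simp
    also have "\<dots> = (\<Sum>a\<in>range unit_mindex. F i a * cf (monpow G a) (unit_mindex k))"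
      using F by (subst sum.insert) (auto simp: fixes_origin_def)
    also have "\<dots> = (\<Sum>j\<in>UNIV. F i (unit_mindex j) * G j (unit_mindex k))"
      by (subst sum.reindex) (auto simp: inj_on_def monpow_unit)
    finally show ?thesis .
  qed
  then show ?thesis by (simp add: lin_part_def matrix_matrix_mult_def vec_eq_iff)
qed

section \<open>Diagonal linear maps\<close>

definition is_diag :: "complex^('n::finite)^'n \<Rightarrow> bool" where
  "is_diag D \<longleftrightarrow> (\<forall>i j. i \<noteq> j \<longrightarrow> D$i$j = 0)"

definition diag_pow :: "complex^('n::finite)^'n \<Rightarrow> 'n mindex \<Rightarrow> complex" where
  "diag_pow D b = (\<Prod>i\<in>UNIV. (D$i$i) ^ b i)"

lemma diag_pow_unit[simp]: "diag_pow D (unit_mindex j) = D$j$j"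
proof -
  have "diag_pow D (unit_mindex j) = (\<Prod>i\<in>UNIV. if i = j then D$i$i else 1)"
    unfolding diag_pow_def unit_mindex_def by (rule prod.cong) auto
  then show ?thesis by simp
qed

lemma diag_pow_madd: "diag_pow D (madd a b) = diag_pow D a * diag_pow D b"
  by (simp add: diag_pow_def madd_def power_add prod.distrib)

lemma diag_pow_0[simp]: "diag_pow D (\<lambda>_. 0) = 1" by (simp add: diag_pow_def)

lemma lin_map_diag: "is_diag D \<Longrightarrow> lin_map D j b = (if b = unit_mindex j then D$j$j else 0)"
proof (cases "b = unit_mindex j")
  case False
  assume D: "is_diag D"
  have "lin_map D j b = 0" unfolding lin_map_def
    by (rule sum.neutral) (use D False in \<open>auto simp: is_diag_def\<close>)
  then show ?thesis using False by simp
qed simp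

lemma Ser_lin_map_diag: "is_diag D \<Longrightarrow> Ser (lin_map D j) = mconst (D$j$j) * mmono (unit_mindex j)"
  by (rule mser_eqI) (auto simp: cf_const_mult lin_map_diag)

lemma monpow_diag: "is_diag D \<Longrightarrow> monpow (lin_map D) a = mconst (diag_pow D a) * mmono a"
proof -
  assume D: "is_diag D"
  have "monpow (lin_map D) a = (\<Prod>j\<in>UNIV. mconst ((D$j$j) ^ a j) * mmono (\<lambda>i. a j * unit_mindex j i))"
    unfolding monpow_def Ser_lin_map_diag[OF D] by (simp add: power_mult_distrib const_power mono_power)
  also have "\<dots> = mconst (diag_pow D a) * mmono (\<lambda>i. \<Sum>j\<in>UNIV. a j * unit_mindex j i)"
    by (simp add: prod.distrib const_prod mono_prod diag_pow_def)
  also have "(\<lambda>i. \<Sum>j\<in>UNIV. a j * unit_mindex j i) = a"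
    by (simp add: unit_mindex_def fun_eq_iff if_distrib cong: if_cong)
  finally show ?thesis .
qed

lemma comp_diag_right: "is_diag D \<Longrightarrow> fm_comp F (lin_map D) i b = diag_pow D b * F i b"
proof -
  assume D: "is_diag D"
  have "fm_comp F (lin_map D) i b = (\<Sum>a\<in>mbox (mdeg b). if a = b then diag_pow D b * F i b else 0)"
    unfolding fm_comp_subst cf_subst monpow_diag[OF D] cf_const_mult by (rule sum.cong) auto
  also have "\<dots> = diag_pow D b * F i b" by (subst sum.delta[OF finite_box]) (simp add: mbox_def)
  finally show ?thesis .
qed

lemma comp_diag_left: "is_diag D \<Longrightarrow> fixes_origin H \<Longrightarrow> fm_comp (lin_map D) H i b = D$i$i * H i b"
proof -
  assume D: "is_diag D" and H: "fixes_origin H"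
  have "fm_comp (lin_map D) H i b = (\<Sum>j\<in>UNIV. if j = i then D$i$i * H i b else 0)"
    unfolding comp_lin_left[OF H] by (rule sum.cong) (use D in \<open>auto simp: is_diag_def\<close>)
  then show ?thesis by simp
qed

text \<open>eigen D c x: the series x is an eigenvector, with eigenvalue c, of s \<mapsto> s \<circ> lin_map D.
  Products of eigenvectors are eigenvectors, so G^a is one when all G_j are.\<close>

definition eigen :: "complex^('n::finite)^'n \<Rightarrow> complex \<Rightarrow> 'n mser \<Rightarrow> bool" where
  "eigen D c x \<longleftrightarrow> (\<forall>b. diag_pow D b * cf x b = c * cf x b)"

lemma eigen_mult: 
  fixes x y :: "('n::finite) mser"
  assumes "eigen D c x" "eigen D c' y" shows "eigen D (c * c') (x * y)"
  unfolding eigen_def cf_simps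
proof (intro allI)
  fix b :: "'n mindex"
  have "diag_pow D b * (\<Sum>(u, v)\<in>spl b. cf x u * cf y v) = (\<Sum>(u, v)\<in>spl b. (diag_pow D u * cf x u) * (diag_pow D v * cf y v))"
    unfolding sum_distrib_left case_prod_unfold
    by (rule sum.cong) (auto simp: diag_pow_madd[symmetric] algebra_simps)
  also have "\<dots> = (\<Sum>(u, v)\<in>spl b. (c * cf x u) * (c' * cf y v))"
    using assms unfolding eigen_def by (intro sum.cong) (auto simp: case_prod_unfold)
  also have "\<dots> = c * c' * (\<Sum>(u, v)\<in>spl b. cf x u * cf y v)"
    by (simp add: sum_distrib_left case_prod_unfold algebra_simps)
  finally show "diag_pow D b * (\<Sum>(u, v)\<in>spl b. cf x u * cf y v) = c * c' * (\<Sum>(u, v)\<in>spl b. cf x u * cf y v)" .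
qed

lemma eigen_one: "eigen D 1 1"
  by (simp add: eigen_def cf_simps)

lemma eigen_power: "eigen D c x \<Longrightarrow> eigen D (c ^ k) (x ^ k)"
  by (induction k) (auto simp: eigen_one eigen_mult)

lemma eigen_prod: "finite A \<Longrightarrow> (\<And>j. j\<in>A \<Longrightarrow> eigen D (c j) (x j)) \<Longrightarrow> eigen D (\<Prod>j\<in>A. c j) (\<Prod>j\<in>A. x j)"
  by (induction A rule: finite_induct) (auto simp: eigen_one eigen_mult)

lemma eigen_monpow: "(\<And>j. eigen D (D$j$j) (Ser (G j))) \<Longrightarrow> eigen D (diag_pow D a) (monpow G a)"
  unfolding monpow_def diag_pow_def by (rule eigen_prod) (auto intro: eigen_power)

section \<open>Inverting maps tangent to the identity\<close>

text \<open>Substituting two maps that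
  agree up to degree d into a series of order at least two gives results agreeing up
  to degree d + 1; this contraction drives the fixed-point construction of inverses.\<close>

definition order_ge2 :: "('n::finite) fmap \<Rightarrow> bool" where
  "order_ge2 N \<longleftrightarrow> (\<forall>i a. mdeg a \<le> 1 \<longrightarrow> N i a = 0)"

lemma contraction:
  fixes s :: "('n::finite) mser" and G G' :: "'n fmap"
  assumes s: "\<And>a. mdeg a \<le> 1 \<Longrightarrow> cf s a = 0"
    and G: "fixes_origin G" and G': "fixes_origin G'" and ag: "agree_upto d G G'"
    and b: "mdeg b \<le> d + 1"
  shows "cf (subst G s) b = cf (subst G' s) b"
  unfolding cf_subst
proof (rule sum.cong[OF refl])
  fix a :: "'n mindex" assume "a \<in> mbox (mdeg b)"
  show "cf s a * cf (monpow G a) b = cf s a * cf (monpow G' a) b"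
  proof (cases "mdeg a \<le> 1")
    case True then show ?thesis using s by simp
  next
    case False
    then have "mdeg b < d + mdeg a" using b by linarith
    then show ?thesis using agree_below_monpow[OF G G' ag, of a] by (simp add: agree_below_def)
  qed
qed

lemma order_ge2_comp_low:
  assumes "order_ge2 N" "mdeg b \<le> 1"
  shows "fm_comp N G i b = 0"
  unfolding fm_comp_subst cf_subst
  by (rule sum.neutral) (use assms in \<open>auto simp: mbox_def order_ge2_def\<close>)

lemma order_ge2_contraction:
  assumes "order_ge2 N" "fixes_origin G" "fixes_origin G'" "agree_upto d G G'" "mdeg b \<le> d + 1"
  shows "fm_comp N G i b = fm_comp N G' i b"
  unfolding fm_comp_subst using contraction[OF _ assms(2-5)] assms(1) by (simp add: order_ge2_def)

text \<open>If F = id + N with N of order at least two, a right inverse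
  G of F is the fixed point of G = id - N \<circ> G; the iterates stabilise
  degree by degree.\<close>

primrec inv_approx :: "('n::finite) fmap \<Rightarrow> nat \<Rightarrow> 'n fmap" where
  "inv_approx N 0 = fm_id"
| "inv_approx N (Suc d) = (\<lambda>i b. fm_id i b - fm_comp N (inv_approx N d) i b)"

lemma inv_approx_fixes_origin:
  assumes "order_ge2 N" shows "fixes_origin (inv_approx N d)"
proof (cases d)
  case (Suc e)
  then show ?thesis using order_ge2_comp_low[OF assms, of "\<lambda>_. 0"]
    by (simp add: fixes_origin_def fm_id_def)
qed simp

lemma inv_approx_agree:
  assumes N: "order_ge2 N" shows "agree_upto d (inv_approx N d) (inv_approx N (Suc d))"
proof (induction d)
  case 0
  show ?case using inv_approx_fixes_origin[OF N, of 0] inv_approx_fixes_origin[OF N, of 1]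
    by (auto simp: agree_upto_def mdeg_eq_0_iff fixes_origin_def)
next
  case (Suc d)
  show ?case unfolding agree_upto_def
    using order_ge2_contraction[OF N inv_approx_fixes_origin[OF N] inv_approx_fixes_origin[OF N] Suc]
    by simp
qed

lemma inv_approx_stable:
  assumes N: "order_ge2 N"
  shows "inv_approx N (mdeg b + k) j b = inv_approx N (mdeg b) j b"
proof (induction k)
  case (Suc k)
  have "inv_approx N (mdeg b + k) j b = inv_approx N (Suc (mdeg b + k)) j b"
    using inv_approx_agree[OF N, of "mdeg b + k"] by (simp add: agree_upto_def)
  then show ?case using Suc by simp
qed simp

definition inv_limit :: "('n::finite) fmap \<Rightarrow> 'n fmap" where
  "inv_limit N = (\<lambda>j b. inv_approx N (mdeg b) j b)"

lemma inv_limit_fixes_origin: "order_ge2 N \<Longrightarrow> fixes_origin (inv_limit N)"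
  using inv_approx_fixes_origin[of N 0] by (simp add: inv_limit_def fixes_origin_def)

lemma inv_limit_agree: "order_ge2 N \<Longrightarrow> agree_upto d (inv_limit N) (inv_approx N d)"
  unfolding agree_upto_def inv_limit_def using inv_approx_stable
  by (metis le_add_diff_inverse)

lemma inv_limit_fixed_point:
  assumes N: "order_ge2 N"
  shows "inv_limit N i b + fm_comp N (inv_limit N) i b = fm_id i b"
proof (cases "mdeg b")
  case 0
  then show ?thesis using inv_limit_fixes_origin[OF N] order_ge2_comp_low[OF N]
    by (simp add: mdeg_eq_0_iff fixes_origin_def fm_id_def)
next
  case (Suc e)
  have "fm_comp N (inv_limit N) i b = fm_comp N (inv_approx N e) i b"
    using order_ge2_contraction[OF N inv_limit_fixes_origin[OF N] inv_approx_fixes_origin[OF N]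
        inv_limit_agree[OF N]] Suc by simp
  then show ?thesis using Suc by (simp add: inv_limit_def)
qed

lemma order_ge2_minus_id:
  fixes F :: "('n::finite) fmap"
  assumes F0: "fixes_origin F" and F1: "lin_part F = mat 1"
  shows "order_ge2 (\<lambda>i b. F i b - fm_id i b)"
  unfolding order_ge2_def
proof (intro allI impI)
  fix i and a :: "'n mindex" assume "mdeg a \<le> 1"
  then consider "a = (\<lambda>_. 0)" | j where "a = unit_mindex j" using mdeg_le1 by blast
  then show "F i a - fm_id i a = 0"
  proof cases
    case 1 then show ?thesis using F0 by (simp add: fixes_origin_def fm_id_def)
  next
    case 2 then show ?thesis using F1 by (simp add: lin_part_def vec_eq_iff mat_def fm_id_def)
  qed
qed

lemma fm_comp_add_left:
  "fm_comp (\<lambda>i b. A i b + B i b) G i b = fm_comp A G i b + fm_comp B G i b"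
  by (simp add: fm_comp_def distrib_right sum.distrib)

lemma tangent_right_inv:
  fixes F :: "('n::finite) fmap"
  assumes F0: "fixes_origin F" and F1: "lin_part F = mat 1"
  shows "\<exists>G. fixes_origin G \<and> lin_part G = mat 1 \<and> fm_comp F G = fm_id"
proof -
  define N where "N = (\<lambda>i b. F i b - fm_id i (b::'n mindex))"
  have N: "order_ge2 N" unfolding N_def by (rule order_ge2_minus_id[OF F0 F1])
  define G where "G = inv_limit N"
  have G0: "fixes_origin G" unfolding G_def by (rule inv_limit_fixes_origin[OF N])
  have F: "F = (\<lambda>i b. fm_id i b + N i b)" by (simp add: N_def)
  have "fm_comp F G i b = fm_id i b" for i b
    unfolding F fm_comp_add_left fm_comp_id_left[OF G0] using inv_limit_fixed_point[OF N]
    by (simp add: G_def)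
  then have "fm_comp F G = fm_id" by (intro ext)
  moreover have "lin_part G = mat 1"
  proof -
    have "G i (unit_mindex k) = fm_id i (unit_mindex k)" for i k
      using inv_limit_fixed_point[OF N, of i "unit_mindex k"] order_ge2_comp_low[OF N]
      by (simp add: G_def)
    then show ?thesis by (simp add: lin_part_def vec_eq_iff fm_id_def mat_def)
  qed
  ultimately show ?thesis using G0 by blast
qed

lemma tangent_inv:
  fixes F :: "('n::finite) fmap"
  assumes F0: "fixes_origin F" and F1: "lin_part F = mat 1"
  shows "\<exists>G. fixes_origin G \<and> lin_part G = mat 1 \<and> fm_comp F G = fm_id \<and> fm_comp G F = fm_id"
proof -
  obtain G where G: "fixes_origin G" "lin_part G = mat 1" "fm_comp F G = fm_id"
    using tangent_right_inv[OF F0 F1] by blast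
  obtain H where H: "fixes_origin H" "lin_part H = mat 1" "fm_comp G H = fm_id"
    using tangent_right_inv[OF G(1,2)] by blast
  have "F = fm_comp F (fm_comp G H)" by (simp add: H)
  also have "\<dots> = fm_comp (fm_comp F G) H" by (simp only: fm_comp_assoc[OF G(1) H(1)])
  also have "\<dots> = H" by (simp add: G fm_comp_id_left H)
  finally show ?thesis using G H by auto
qed

section \<open>Invertible formal maps and conjugation\<close>

definition fm_inverse :: "('n::finite) fmap \<Rightarrow> 'n fmap \<Rightarrow> bool" where
  "fm_inverse \<psi> \<phi> \<longleftrightarrow> fixes_origin \<psi> \<and> fixes_origin \<phi> \<and> fm_comp \<psi> \<phi> = fm_id \<and> fm_comp \<phi> \<psi> = fm_id"

definition fm_conj :: "('n::finite) fmap \<Rightarrow> 'n fmap \<Rightarrow> 'n fmap \<Rightarrow> 'n fmap" where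
  "fm_conj \<psi> \<phi> g = fm_comp \<psi> (fm_comp g \<phi>)"

lemma simul_formally_linearizable_iff:
  "simul_formally_linearizable F S \<longleftrightarrow>
     (\<exists>\<psi> \<phi>. fm_inverse \<psi> \<phi> \<and> (\<forall>k\<in>S. fm_linear (fm_conj \<psi> \<phi> (F k))))"
  unfolding simul_formally_linearizable_def fm_inverse_def fm_conj_def by blast

lemma fm_inverse_sym: "fm_inverse \<psi> \<phi> \<Longrightarrow> fm_inverse \<phi> \<psi>"
  by (auto simp: fm_inverse_def)

lemma fm_inverse_id: "fm_inverse fm_id fm_id"
  by (simp add: fm_inverse_def fm_comp_id_left)

lemma fm_inverse_comp:
  assumes "fm_inverse \<psi>1 \<phi>1" "fm_inverse \<psi>2 \<phi>2"
  shows "fm_inverse (fm_comp \<psi>2 \<psi>1) (fm_comp \<phi>1 \<phi>2)"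
  using assms by (auto simp: fm_inverse_def fm_comp_assoc fm_comp_assoc[symmetric] fm_comp_id_left)

lemma fm_inverse_lin_map:
  "P ** Q = mat 1 \<Longrightarrow> Q ** P = mat 1 \<Longrightarrow> fm_inverse (lin_map P) (lin_map Q)"
  by (simp add: fm_inverse_def lin_map_comp lin_map_1)

lemma fm_inverse_lin_part:
  "fm_inverse \<psi> \<phi> \<Longrightarrow> lin_part \<psi> ** lin_part \<phi> = mat 1"
  by (metis fm_inverse_def lin_part_comp lin_part_id)

lemma fm_inverse_tangent:
  "fm_inverse \<psi> \<phi> \<Longrightarrow> lin_part \<psi> = mat 1 \<Longrightarrow> lin_part \<phi> = mat 1"
  using fm_inverse_lin_part by (metis matrix_mul_lid)

lemma fixes_origin_conj: "fixes_origin \<psi> \<Longrightarrow> fixes_origin (fm_conj \<psi> \<phi> g)"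
  by (simp add: fm_conj_def)

lemma lin_part_conj:
  "fixes_origin \<psi> \<Longrightarrow> fixes_origin \<phi> \<Longrightarrow> fixes_origin g \<Longrightarrow>
   lin_part (fm_conj \<psi> \<phi> g) = lin_part \<psi> ** lin_part g ** lin_part \<phi>"
  by (simp add: fm_conj_def lin_part_comp matrix_mul_assoc)

lemma conj_lin_map:
  "fm_conj (lin_map A) (lin_map B) (lin_map D) = lin_map (A ** D ** B)"
  by (simp add: fm_conj_def lin_map_comp matrix_mul_assoc)

lemma fm_comp_cancel:
  "fixes_origin A \<Longrightarrow> fixes_origin X \<Longrightarrow> fm_comp P A = fm_id \<Longrightarrow> fm_comp P (fm_comp A X) = X"
  by (simp add: fm_comp_assoc[symmetric] fm_comp_id_left)

lemma conj_comp:
  assumes "fm_inverse \<psi> \<phi>" "fixes_origin g" "fixes_origin h"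
  shows "fm_conj \<psi> \<phi> (fm_comp g h) = fm_comp (fm_conj \<psi> \<phi> g) (fm_conj \<psi> \<phi> h)"
proof -
  have "fm_comp \<phi> (fm_comp \<psi> (fm_comp h \<phi>)) = fm_comp h \<phi>"
    using assms by (intro fm_comp_cancel) (auto simp: fm_inverse_def)
  then show ?thesis
    using assms by (simp add: fm_conj_def fm_inverse_def fm_comp_assoc)
qed

lemma conj_conj:
  assumes "fm_inverse \<psi>1 \<phi>1" "fm_inverse \<psi>2 \<phi>2" "fixes_origin g"
  shows "fm_conj \<psi>2 \<phi>2 (fm_conj \<psi>1 \<phi>1 g) = fm_conj (fm_comp \<psi>2 \<psi>1) (fm_comp \<phi>1 \<phi>2) g"
  using assms by (simp add: fm_conj_def fm_inverse_def fm_comp_assoc)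

lemma conj_back:
  assumes "fm_inverse \<psi> \<phi>" "fixes_origin g"
  shows "fm_conj \<phi> \<psi> (fm_conj \<psi> \<phi> g) = g"
  using conj_conj[OF assms(1) fm_inverse_sym[OF assms(1)] assms(2)] assms
  by (simp add: fm_conj_def fm_inverse_def fm_comp_id_left)

lemma conj_eq_iff:
  assumes "fm_inverse \<psi> \<phi>" "fixes_origin g" "fixes_origin L"
  shows "fm_conj \<psi> \<phi> g = L \<longleftrightarrow> fm_comp \<psi> g = fm_comp L \<psi>"
proof
  assume "fm_conj \<psi> \<phi> g = L"
  then have "fm_comp L \<psi> = fm_comp \<psi> (fm_comp g (fm_comp \<phi> \<psi>))"
    using assms by (auto simp: fm_conj_def fm_inverse_def fm_comp_assoc)
  then show "fm_comp \<psi> g = fm_comp L \<psi>" using assms by (simp add: fm_inverse_def)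
next
  assume eq: "fm_comp \<psi> g = fm_comp L \<psi>"
  have "fm_conj \<psi> \<phi> g = fm_comp (fm_comp \<psi> g) \<phi>"
    using assms by (simp add: fm_conj_def fm_inverse_def fm_comp_assoc)
  also have "\<dots> = fm_comp L (fm_comp \<psi> \<phi>)"
    using assms by (simp add: eq fm_inverse_def fm_comp_assoc)
  finally show "fm_conj \<psi> \<phi> g = L" using assms by (simp add: fm_inverse_def)
qed

lemma conj_commute_iff:
  assumes "fm_inverse \<psi> \<phi>" "fixes_origin g" "fixes_origin h"
  shows "fm_comp (fm_conj \<psi> \<phi> g) (fm_conj \<psi> \<phi> h) = fm_comp (fm_conj \<psi> \<phi> h) (fm_conj \<psi> \<phi> g)
     \<longleftrightarrow> fm_comp g h = fm_comp h g"
  using conj_comp[OF assms] conj_comp[OF assms(1,3,2)]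
    conj_back[OF assms(1), of "fm_comp g h"] conj_back[OF assms(1), of "fm_comp h g"] assms(2,3)
  by (metis fixes_origin_comp)

section \<open>Conjugacy to the linear part by a tangent-to-identity map\<close>

definition tangent_conj :: "('n::finite) fmap \<Rightarrow> complex^'n^'n \<Rightarrow> bool" where
  "tangent_conj g D \<longleftrightarrow>
     (\<exists>\<psi> \<phi>. fm_inverse \<psi> \<phi> \<and> lin_part \<psi> = mat 1 \<and> fm_conj \<psi> \<phi> g = lin_map D)"

lemma tangent_conj_transport:
  assumes g: "tangent_conj g D" "fixes_origin g" and \<theta>: "fm_inverse \<theta> \<eta>"
  shows "tangent_conj (fm_conj \<theta> \<eta> g) (lin_part \<theta> ** D ** lin_part \<eta>)"
proof -
  obtain \<psi> \<phi> where \<psi>: "fm_inverse \<psi> \<phi>" "lin_part \<psi> = mat 1" "fm_conj \<psi> \<phi> g = lin_map D"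
    using g(1) by (auto simp: tangent_conj_def)
  let ?A = "lin_part \<theta>" and ?B = "lin_part \<eta>"
  have lin: "fm_inverse (lin_map ?A) (lin_map ?B)"
    using fm_inverse_lin_part[OF \<theta>] fm_inverse_lin_part[OF fm_inverse_sym[OF \<theta>]]
    by (rule fm_inverse_lin_map)
  define \<psi>' where "\<psi>' = fm_comp (lin_map ?A) (fm_comp \<psi> \<eta>)"
  define \<phi>' where "\<phi>' = fm_comp (fm_comp \<theta> \<phi>) (lin_map ?B)"
  have inner: "fm_inverse (fm_comp \<psi> \<eta>) (fm_comp \<theta> \<phi>)"
    by (rule fm_inverse_comp[OF fm_inverse_sym[OF \<theta>] \<psi>(1)])
  have inv: "fm_inverse \<psi>' \<phi>'" unfolding \<psi>'_def \<phi>'_def by (rule fm_inverse_comp[OF inner lin])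
  have outer: "fm_conj \<psi>' \<phi>' (fm_conj \<theta> \<eta> g)
      = fm_conj (lin_map ?A) (lin_map ?B) (fm_conj (fm_comp \<psi> \<eta>) (fm_comp \<theta> \<phi>) (fm_conj \<theta> \<eta> g))"
    unfolding \<psi>'_def \<phi>'_def using \<theta>
    by (intro conj_conj[OF inner lin, symmetric]) (simp add: fixes_origin_conj fm_inverse_def)
  have "fm_conj (fm_comp \<psi> \<eta>) (fm_comp \<theta> \<phi>) (fm_conj \<theta> \<eta> g)
      = fm_conj \<psi> \<phi> (fm_conj \<eta> \<theta> (fm_conj \<theta> \<eta> g))"
    using \<theta> by (intro conj_conj[OF fm_inverse_sym[OF \<theta>] \<psi>(1), symmetric])
      (simp add: fixes_origin_conj fm_inverse_def)
  also have "\<dots> = lin_map D" using conj_back[OF \<theta> g(2)] \<psi>(3) by simp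
  finally have "fm_conj \<psi>' \<phi>' (fm_conj \<theta> \<eta> g) = lin_map (?A ** D ** ?B)"
    using outer by (simp add: conj_lin_map)
  moreover have "lin_part \<psi>' = mat 1"
    using \<psi> \<theta> fm_inverse_lin_part[OF \<theta>]
    by (simp add: \<psi>'_def lin_part_comp fm_inverse_def matrix_mul_lid)
  ultimately show ?thesis using inv by (auto simp: tangent_conj_def)
qed

lemma formally_linearizable_tangent_conj:
  assumes f: "fixes_origin f" "formally_linearizable f"
  shows "tangent_conj f (lin_part f)"
proof -
  obtain \<psi> \<phi> where inv: "fm_inverse \<psi> \<phi>" and lin: "fm_linear (fm_conj \<psi> \<phi> f)"
    using f(2) by (auto simp: formally_linearizable_def simul_formally_linearizable_iff)
  define L where "L = fm_conj \<psi> \<phi> f"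
  have L0: "fixes_origin L" using inv by (simp add: L_def fixes_origin_conj fm_inverse_def)
  have "tangent_conj L (lin_part L)"
    using fm_inverse_id linear_eq_lin_map[OF lin] fm_comp_id_left[OF L0]
    unfolding tangent_conj_def by (intro exI[of _ fm_id]) (simp add: fm_conj_def lin_part_id L_def)
  then have "tangent_conj (fm_conj \<phi> \<psi> L) (lin_part \<phi> ** lin_part L ** lin_part \<psi>)"
    using tangent_conj_transport[OF _ L0 fm_inverse_sym[OF inv]] by blast
  moreover have "fm_conj \<phi> \<psi> L = f" unfolding L_def using conj_back[OF inv f(1)] .
  ultimately show ?thesis
    using lin_part_conj[OF _ _ L0, of \<phi> \<psi>] inv by (simp add: fm_inverse_def)
qed

section \<open>Resonant projection\<close>

text \<open>Let g commute with the diagonal linear maps D k, k \<in> S.  Then composition with g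
  respects the splitting of coefficients into the resonant ones (monomials z^b in the i-th
  component with (D k)^b = (D k)_ii for all k \<in> S) and the rest, because g preserves the
  joint eigenspaces of the operators s \<mapsto> s \<circ> D k.  Discarding the non-resonant part of a
  linearizing map of g therefore yields one that also commutes with all D k.\<close>

lemma commute_diag_eigen:
  assumes D: "is_diag D" and g: "fixes_origin g"
    and comm: "fm_comp g (lin_map D) = fm_comp (lin_map D) g"
  shows "eigen D (diag_pow D a) (monpow g a)"
proof (rule eigen_monpow)
  fix j
  show "eigen D (D $ j $ j) (Ser (g j))"
    unfolding eigen_def
  proof
    fix b
    have "fm_comp g (lin_map D) j b = fm_comp (lin_map D) g j b" using comm by simp
    then show "diag_pow D b * cf (Ser (g j)) b = D $ j $ j * cf (Ser (g j)) b"
      using D g by (simp add: comp_diag_right comp_diag_left)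
  qed
qed

definition resonant :: "(nat \<Rightarrow> complex^('n::finite)^'n) \<Rightarrow> nat set \<Rightarrow> 'n \<Rightarrow> 'n mindex set" where
  "resonant D S i = {b. \<forall>k\<in>S. diag_pow (D k) b = D k $ i $ i}"

definition res_proj :: "(nat \<Rightarrow> complex^('n::finite)^'n) \<Rightarrow> nat set \<Rightarrow> 'n fmap \<Rightarrow> 'n fmap" where
  "res_proj D S c = (\<lambda>i b. if b \<in> resonant D S i then c i b else 0)"

lemma monpow_resonant_block:
  assumes D: "\<forall>k\<in>S. is_diag (D k)" and g: "fixes_origin g"
    and comm: "\<forall>k\<in>S. fm_comp g (lin_map (D k)) = fm_comp (lin_map (D k)) g"
    and ab: "(a \<in> resonant D S i) \<noteq> (b \<in> resonant D S i)"
  shows "cf (monpow g a) b = 0"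
proof (rule ccontr)
  assume nz: "cf (monpow g a) b \<noteq> 0"
  have "diag_pow (D k) b = diag_pow (D k) a" if "k \<in> S" for k
  proof -
    have "diag_pow (D k) b * cf (monpow g a) b = diag_pow (D k) a * cf (monpow g a) b"
      using commute_diag_eigen[of "D k" g a] D g comm that by (simp add: eigen_def)
    then show ?thesis using nz by simp
  qed
  then show False using ab by (simp add: resonant_def)
qed

lemma res_proj_comp_right:
  assumes "\<forall>k\<in>S. is_diag (D k)" "fixes_origin g"
    "\<forall>k\<in>S. fm_comp g (lin_map (D k)) = fm_comp (lin_map (D k)) g"
  shows "fm_comp (res_proj D S c) g i b = (if b \<in> resonant D S i then fm_comp c g i b else 0)"
proof -
  have block: "cf (monpow g a) b = 0" if "(a \<in> resonant D S i) \<noteq> (b \<in> resonant D S i)" for a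
    using monpow_resonant_block[OF assms that] .
  show ?thesis unfolding fm_comp_subst cf_subst
    using block by (auto simp: res_proj_def intro!: sum.cong sum.neutral)
qed

lemma fixes_origin_res_proj: "fixes_origin c \<Longrightarrow> fixes_origin (res_proj D S c)"
  by (simp add: fixes_origin_def res_proj_def)

lemma res_proj_diag_left:
  "is_diag E \<Longrightarrow> fixes_origin c \<Longrightarrow>
   fm_comp (lin_map E) (res_proj D S c) = res_proj D S (fm_comp (lin_map E) c)"
  by (simp add: fun_eq_iff comp_diag_left fixes_origin_res_proj) (simp add: res_proj_def comp_diag_left)

lemma res_proj_commutes:
  "is_diag (D k) \<Longrightarrow> k \<in> S \<Longrightarrow> fixes_origin c \<Longrightarrow>
   fm_comp (res_proj D S c) (lin_map (D k)) = fm_comp (lin_map (D k)) (res_proj D S c)"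
  by (simp add: fun_eq_iff comp_diag_right comp_diag_left fixes_origin_res_proj)
     (simp add: res_proj_def resonant_def)

lemma res_proj_tangent:
  assumes "lin_part c = mat 1" shows "lin_part (res_proj D S c) = mat 1"
proof -
  have "c i (unit_mindex j) = (if i = j then 1 else 0)" for i j
    using assms by (simp add: lin_part_def vec_eq_iff mat_def)
  moreover have "unit_mindex i \<in> resonant D S i" for i by (simp add: resonant_def)
  ultimately show ?thesis by (simp add: lin_part_def vec_eq_iff mat_def res_proj_def)
qed

lemma resonant_linearization:
  fixes D :: "nat \<Rightarrow> complex^('n::finite)^'n"
  assumes D: "\<forall>k\<in>S. is_diag (D k)" and E: "is_diag E" and g: "fixes_origin g"
    and comm: "\<forall>k\<in>S. fm_comp g (lin_map (D k)) = fm_comp (lin_map (D k)) g"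
    and tg: "tangent_conj g E"
  shows "\<exists>\<psi> \<phi>. fm_inverse \<psi> \<phi> \<and> lin_part \<psi> = mat 1 \<and> fm_conj \<psi> \<phi> g = lin_map E \<and>
           (\<forall>k\<in>S. fm_comp \<psi> (lin_map (D k)) = fm_comp (lin_map (D k)) \<psi>)"
proof -
  obtain c \<phi>c where c: "fm_inverse c \<phi>c" "lin_part c = mat 1" "fm_conj c \<phi>c g = lin_map E"
    using tg by (auto simp: tangent_conj_def)
  have c0: "fixes_origin c" using c(1) by (simp add: fm_inverse_def)
  have cg: "fm_comp c g = fm_comp (lin_map E) c" using c conj_eq_iff[OF c(1) g] by simp
  define \<psi> where "\<psi> = res_proj D S c"
  have \<psi>0: "fixes_origin \<psi>" and \<psi>1: "lin_part \<psi> = mat 1"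
    using c0 c(2) by (simp_all add: \<psi>_def fixes_origin_res_proj res_proj_tangent)
  have \<psi>g: "fm_comp \<psi> g = fm_comp (lin_map E) \<psi>"
    using res_proj_comp_right[OF D g comm, of c] res_proj_diag_left[OF E c0, of D S] cg
    by (simp add: \<psi>_def fun_eq_iff res_proj_def)
  obtain \<phi> where \<phi>: "fixes_origin \<phi>" "fm_comp \<psi> \<phi> = fm_id" "fm_comp \<phi> \<psi> = fm_id"
    using tangent_inv[OF \<psi>0 \<psi>1] by blast
  have inv: "fm_inverse \<psi> \<phi>" using \<psi>0 \<phi> by (simp add: fm_inverse_def)
  have "fm_conj \<psi> \<phi> g = lin_map E" using conj_eq_iff[OF inv g] \<psi>g by simp
  moreover have "\<forall>k\<in>S. fm_comp \<psi> (lin_map (D k)) = fm_comp (lin_map (D k)) \<psi>"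
    using D c0 by (simp add: \<psi>_def res_proj_commutes)
  ultimately show ?thesis using inv \<psi>1 by blast
qed

section \<open>Simultaneous linearization of commuting maps\<close>

text \<open>Induction on the family: after conjugating the maps already linearized to their
  diagonal normal forms, the next map commutes with those linear maps; its resonant
  linearization commutes with them too, so composing the two conjugacies keeps the
  earlier maps linear.\<close>

lemma simul_tangent_linearization:
  fixes g :: "nat \<Rightarrow> ('n::finite) fmap" and D :: "nat \<Rightarrow> complex^'n^'n"
  assumes "finite S" and "\<forall>k\<in>S. fixes_origin (g k)" and "\<forall>k\<in>S. is_diag (D k)"
    and "\<forall>k\<in>S. tangent_conj (g k) (D k)"
    and "\<forall>p\<in>S. \<forall>q\<in>S. fm_comp (g p) (g q) = fm_comp (g q) (g p)"
  shows "\<exists>\<psi> \<phi>. fm_inverse \<psi> \<phi> \<and> lin_part \<psi> = mat 1 \<and> (\<forall>k\<in>S. fm_conj \<psi> \<phi> (g k) = lin_map (D k))"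
  using assms
proof (induction S rule: finite_induct)
  case empty
  then show ?case using fm_inverse_id lin_part_id by blast
next
  case (insert a S)
  obtain \<psi> \<phi> where inv: "fm_inverse \<psi> \<phi>" and tan: "lin_part \<psi> = mat 1"
    and lin: "\<forall>k\<in>S. fm_conj \<psi> \<phi> (g k) = lin_map (D k)"
    using insert.IH insert.prems by auto
  have g0: "fixes_origin (g k)" if "k \<in> insert a S" for k using insert.prems(1) that by blast
  define g' where "g' = fm_conj \<psi> \<phi> (g a)"
  have g'0: "fixes_origin g'" using inv by (simp add: g'_def fixes_origin_conj fm_inverse_def)
  have comm: "\<forall>k\<in>S. fm_comp g' (lin_map (D k)) = fm_comp (lin_map (D k)) g'"
  proof
    fix k assume k: "k \<in> S"
    have "fm_comp (g a) (g k) = fm_comp (g k) (g a)" using insert.prems(4) k by blast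
    then show "fm_comp g' (lin_map (D k)) = fm_comp (lin_map (D k)) g'"
      using conj_commute_iff[OF inv g0[of a] g0[of k]] lin k by (simp add: g'_def)
  qed
  have "tangent_conj g' (lin_part \<psi> ** D a ** lin_part \<phi>)"
    unfolding g'_def using insert.prems(3) g0 inv by (simp add: tangent_conj_transport)
  then have tg: "tangent_conj g' (D a)"
    using fm_inverse_tangent[OF inv tan] tan by (simp add: matrix_mul_lid matrix_mul_rid)
  obtain \<psi>' \<phi>' where inv': "fm_inverse \<psi>' \<phi>'" and tan': "lin_part \<psi>' = mat 1"
    and a: "fm_conj \<psi>' \<phi>' g' = lin_map (D a)"
    and Dk: "\<forall>k\<in>S. fm_comp \<psi>' (lin_map (D k)) = fm_comp (lin_map (D k)) \<psi>'"
    using resonant_linearization[OF _ _ g'0 comm tg] insert.prems(2) by auto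
  have "fm_conj (fm_comp \<psi>' \<psi>) (fm_comp \<phi> \<phi>') (g k) = lin_map (D k)" if k: "k \<in> insert a S" for k
  proof -
    have "fm_conj (fm_comp \<psi>' \<psi>) (fm_comp \<phi> \<phi>') (g k) = fm_conj \<psi>' \<phi>' (fm_conj \<psi> \<phi> (g k))"
      using conj_conj[OF inv inv' g0[OF k]] by simp
    also have "\<dots> = lin_map (D k)"
      using a Dk lin k conj_eq_iff[OF inv'] by (cases "k = a") (auto simp: g'_def)
    finally show ?thesis .
  qed
  moreover have "lin_part (fm_comp \<psi>' \<psi>) = mat 1"
    using inv inv' tan tan' by (simp add: lin_part_comp fm_inverse_def matrix_mul_lid)
  ultimately show ?case using fm_inverse_comp[OF inv inv'] by blast
qed

lemma commuting_simul_linearizable: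
  fixes f :: "nat \<Rightarrow> ('n::finite) fmap" and P Q :: "complex^'n^'n"
  assumes S: "finite S" and f0: "\<forall>k\<in>S. fixes_origin (f k)"
    and flin: "\<forall>k\<in>S. formally_linearizable (f k)"
    and PQ: "P ** Q = mat 1" and QP: "Q ** P = mat 1"
    and diag: "\<forall>k\<in>S. is_diag (Q ** lin_part (f k) ** P)"
    and comm: "\<forall>p\<in>S. \<forall>q\<in>S. fm_comp (f p) (f q) = fm_comp (f q) (f p)"
  shows "simul_formally_linearizable f S"
proof -
  have QPinv: "fm_inverse (lin_map Q) (lin_map P)" by (rule fm_inverse_lin_map[OF QP PQ])
  define g where "g = (\<lambda>k. fm_conj (lin_map Q) (lin_map P) (f k))"
  define D where "D = (\<lambda>k. Q ** lin_part (f k) ** P)"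
  have g0: "\<forall>k\<in>S. fixes_origin (g k)" by (simp add: g_def fixes_origin_conj)
  have D: "\<forall>k\<in>S. is_diag (D k)" using diag by (simp add: D_def)
  have tg: "\<forall>k\<in>S. tangent_conj (g k) (D k)"
    using tangent_conj_transport[OF formally_linearizable_tangent_conj _ QPinv] f0 flin
    by (simp add: g_def D_def)
  have gcomm: "\<forall>p\<in>S. \<forall>q\<in>S. fm_comp (g p) (g q) = fm_comp (g q) (g p)"
    using conj_commute_iff[OF QPinv] f0 comm by (simp add: g_def)
  obtain \<psi> \<phi> where inv: "fm_inverse \<psi> \<phi>"
    and lin: "\<forall>k\<in>S. fm_conj \<psi> \<phi> (g k) = lin_map (D k)"
    using simul_tangent_linearization[OF S g0 D tg gcomm] by blast
  have "fm_conj (fm_comp \<psi> (lin_map Q)) (fm_comp (lin_map P) \<phi>) (f k) = lin_map (D k)" if "k \<in> S" for k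
    using conj_conj[OF QPinv inv] f0 lin that by (simp add: g_def)
  then show ?thesis using fm_inverse_comp[OF QPinv inv]
    unfolding simul_formally_linearizable_iff by (intro exI) auto
qed

lemma diag_mult_entry:
  "is_diag A \<Longrightarrow> is_diag B \<Longrightarrow> (A ** B) $ i $ k = (if i = k then A$i$i * B$i$i else 0)"
proof -
  assume A: "is_diag A" and B: "is_diag B"
  have "(A ** B) $ i $ k = (\<Sum>j\<in>UNIV. if j = i then A$i$i * B$i$k else 0)"
    unfolding matrix_matrix_mult_def vec_lambda_beta
    by (rule sum.cong) (use A in \<open>auto simp: is_diag_def\<close>)
  then show ?thesis using B by (simp add: is_diag_def)
qed

lemma diag_comm: "is_diag A \<Longrightarrow> is_diag B \<Longrightarrow> A ** B = B ** A"
  by (simp add: vec_eq_iff diag_mult_entry mult.commute)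

lemma matrix_conj_commute:
  fixes A B U V :: "'a::comm_ring_1^'n^'n"
  assumes VU: "V ** U = mat 1" and AB: "A ** B = B ** A"
  shows "(U ** A ** V) ** (U ** B ** V) = (U ** B ** V) ** (U ** A ** V)"
proof -
  have prod: "(U ** X ** V) ** (U ** Y ** V) = U ** (X ** Y) ** V" for X Y
  proof -
    have "(U ** X ** V) ** (U ** Y ** V) = U ** X ** (V ** U) ** Y ** V"
      by (simp add: matrix_mul_assoc)
    then show ?thesis by (simp add: VU matrix_mul_rid matrix_mul_assoc)
  qed
  show ?thesis using AB by (simp add: prod)
qed

lemma diag_conj_commute:
  fixes A B P Q :: "complex^('n::finite)^'n"
  assumes PQ: "P ** Q = mat 1" and QP: "Q ** P = mat 1"
    and "is_diag (Q ** A ** P)" "is_diag (Q ** B ** P)"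
  shows "A ** B = B ** A"
proof -
  have undo: "P ** (Q ** X ** P) ** Q = X" for X
    by (simp add: matrix_mul_assoc[symmetric] PQ matrix_mul_lid) (simp add: matrix_mul_assoc PQ matrix_mul_rid)
  show ?thesis
    using matrix_conj_commute[OF QP diag_comm[OF assms(3,4)]] by (simp add: undo)
qed

lemma simul_linearizable_commute:
  fixes f :: "nat \<Rightarrow> ('n::finite) fmap" and P Q :: "complex^'n^'n"
  assumes sfl: "simul_formally_linearizable f S" and f0: "\<forall>k\<in>S. fixes_origin (f k)"
    and PQ: "P ** Q = mat 1" and QP: "Q ** P = mat 1"
    and diag: "\<forall>k\<in>S. is_diag (Q ** lin_part (f k) ** P)"
  shows "\<forall>p\<in>S. \<forall>q\<in>S. fm_comp (f p) (f q) = fm_comp (f q) (f p)"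
proof (intro ballI)
  fix p q assume p: "p \<in> S" and q: "q \<in> S"
  obtain \<psi> \<phi> where inv: "fm_inverse \<psi> \<phi>" and lin: "\<forall>k\<in>S. fm_linear (fm_conj \<psi> \<phi> (f k))"
    using sfl by (auto simp: simul_formally_linearizable_iff)
  let ?M = "\<lambda>k. lin_part \<psi> ** lin_part (f k) ** lin_part \<phi>"
  have L: "fm_conj \<psi> \<phi> (f k) = lin_map (?M k)" if "k \<in> S" for k
  proof -
    have "lin_part (fm_conj \<psi> \<phi> (f k)) = ?M k"
      using lin_part_conj[of \<psi> \<phi> "f k"] inv f0 that by (simp add: fm_inverse_def)
    then show ?thesis using linear_eq_lin_map lin that by metis
  qed
  have "?M p ** ?M q = ?M q ** ?M p"
    using matrix_conj_commute[OF fm_inverse_lin_part[OF fm_inverse_sym[OF inv]]]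
      diag_conj_commute[OF PQ QP] diag p q by blast
  then have "fm_comp (fm_conj \<psi> \<phi> (f p)) (fm_conj \<psi> \<phi> (f q))
      = fm_comp (fm_conj \<psi> \<phi> (f q)) (fm_conj \<psi> \<phi> (f p))"
    using L p q by (simp add: lin_map_comp)
  then show "fm_comp (f p) (f q) = fm_comp (f q) (f p)"
    using conj_commute_iff[OF inv] f0 p q by blast
qed

theorem theorem2p4:
  fixes f :: "nat \<Rightarrow> ('n::finite) fmap" and h :: nat
  assumes "h \<ge> 2"
    and "\<forall>k\<in>{1..h}. biholo_germ0 (f k)"
    and "\<forall>k\<in>{1..h}. formally_linearizable (f k)"
    and "simul_diagonalizable (\<lambda>k. lin_part (f k)) {1..h}"
  shows "simul_formally_linearizable f {1..h} \<longleftrightarrow>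
         (\<forall>p\<in>{1..h}. \<forall>q\<in>{1..h}. fm_comp (f p) (f q) = fm_comp (f q) (f p))"
proof -
  have f0: "\<forall>k\<in>{1..h}. fixes_origin (f k)"
    using assms(2) by (simp add: biholo_germ0_def)
  obtain P Q :: "complex^'n^'n" where PQ: "P ** Q = mat 1" and QP: "Q ** P = mat 1"
    and diag: "\<forall>k\<in>{1..h}. is_diag (Q ** lin_part (f k) ** P)"
    using assms(4) unfolding simul_diagonalizable_def is_diag_def by (elim exE conjE) simp
  show ?thesis
    using simul_linearizable_commute[OF _ f0 PQ QP diag]
      commuting_simul_linearizable[OF _ f0 assms(3) PQ QP diag] by blast
qed

end
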